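(* Let $\widetilde{\Sigma}_1,\widetilde{\Sigma}_2$ be disjoint visibly pushdown alphabets, $\widetilde{\Sigma}=\widetilde{\Sigma}_1\uplus\widetilde{\Sigma}_2$, and $P_1\subseteq\widetilde{\Sigma}_1^*$, $P_2\subseteq\widetilde{\Sigma}_2^*$ well-matched visibly pushdown languages. If $\prec$ is a contextual order on $\widetilde{\Sigma}$ that is both visibly pushdown and coherent, then $\mathrm{red}_\prec(P_1\parallel P_2)$ is a visibly pushdown language and every word in it is well-nested.
   Context: A visibly pushdown (VP) alphabet is a finite alphabet partitioned into calls, returns and internals; write $\Sigma^{\mathsf{call}}_i,\Sigma^{\mathsf{ret}}_i$ for the calls and returns of $\widetilde{\Sigma}_i$; $\widetilde{\Sigma}$ has as calls/returns/internals the unions. Calls and returns in a word are matched like opening and closing parentheses (internals ignored); unmatched ones are pending; a word is well-matched if none are pending. A visibly pushdown automaton (VPA) is a pushdown automaton with bottom symbol $\bot$ that pushes one non-$\bot$ symbol on each call, pops the top on each return (reading $\bot$ on empty stack without removing it), and leaves the stack unchanged on internals; visibly pushdown languages are those accepted by VPAs. Shuffle: $P_1\parallel P_2=\{w\in\widetilde{\Sigma}^*:\Pi_{\widetilde{\Sigma}_i}(w)\in P_i\}$, $\Pi_{\widetilde{\Sigma}_i}$ erasing letters outside $\widetilde{\Sigma}_i$. A word is well-nested if every matched call–return pair consists of letters from the same $\widetilde{\Sigma}_k$. $\mathbb{I}=\{(a,b):a\in\widetilde{\Sigma}_i,b\in\widetilde{\Sigma}_j,i\ne j\}$, $\equiv_{\mathbb{I}}$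 the least reflexive transitive relation with $uabv\equiv_{\mathbb{I}}ubav$ for $(a,b)\in\mathbb{I}$. A contextual order is a map $\prec$ from $\widetilde{\Sigma}^*$ to strict total orders on $\widetilde{\Sigma}$; it induces $\preceq$: $\sigma\preceq\rho$ iff $\sigma$ is a prefix of $\rho$ or $\sigma=\alpha a\beta$, $\rho=\alpha b\gamma$ with $a\prec_\alpha b$. $\mathrm{red}_\prec(L)=\{w\in L:\forall u\in L,(u\equiv_{\mathbb{I}}w\wedge u\preceq w)\Rightarrow u=w\}$. $\prec$ is visibly pushdown if there is a complete deterministic VPA $A$ over $\widetilde{\Sigma}$ and a map $\mathsf{ord}$ from its states to strict total orders on $\widetilde{\Sigma}$ with $\prec_w=\mathsf{ord}(q)$, $q$ the state reached by $A$ after reading $w$. $\prec$ is coherent if for every $u\in\widetilde{\Sigma}^*$ and $i\in\{1,2\}$: if $u$ has pending calls and the last one is in $\Sigma^{\mathsf{call}}_i$, then $a\prec_u r$ for all $a\in\widetilde{\Sigma}_i$, $r\in\bigcup_{j\ne i}\Sigma^{\mathsf{ret}}_j$. *)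

theory Defs
  imports Main
begin

type_synonym 'a vpalph = "'a set \<times> 'a set \<times> 'a set"

definition calls :: "'a vpalph \<Rightarrow> 'a set" where "calls A = fst A"
definition rets :: "'a vpalph \<Rightarrow> 'a set" where "rets A = fst (snd A)"
definition ints :: "'a vpalph \<Rightarrow> 'a set" where "ints A = snd (snd A)"
definition letters :: "'a vpalph \<Rightarrow> 'a set" where
  "letters A = calls A \<union> rets A \<union> ints A"

definition vp_alphabet :: "'a vpalph \<Rightarrow> bool" where
  "vp_alphabet A \<longleftrightarrow> finite (letters A) \<and> calls A \<inter> rets A = {} \<and>
     calls A \<inter> ints A = {} \<and> rets A \<inter> ints A = {}"

definition vp_union :: "'a vpalph \<Rightarrow> 'a vpalph \<Rightarrow> 'a vpalph" where
  "vp_union A B = (calls A \<union> calls B, rets A \<union> rets B, ints A \<union> ints B)"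

inductive balanced :: "'a vpalph \<Rightarrow> 'a list \<Rightarrow> bool" for A where
  bal_nil: "balanced A []"
| bal_int: "a \<notin> calls A \<Longrightarrow> a \<notin> rets A \<Longrightarrow> balanced A [a]"
| bal_app: "balanced A u \<Longrightarrow> balanced A v \<Longrightarrow> balanced A (u @ v)"
| bal_nest: "c \<in> calls A \<Longrightarrow> r \<in> rets A \<Longrightarrow> balanced A u \<Longrightarrow> balanced A (c # u @ [r])"

definition matched :: "'a vpalph \<Rightarrow> 'a list \<Rightarrow> nat \<Rightarrow> nat \<Rightarrow> bool" where
  "matched A w i j \<longleftrightarrow> i < j \<and> j < length w \<and> w ! i \<in> calls A \<and> w ! j \<in> rets A \<and>
     balanced A (take (j - i - 1) (drop (i + 1) w))"

definition pending_call :: "'a vpalph \<Rightarrow> 'a list \<Rightarrow> nat \<Rightarrow> bool" where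
  "pending_call A w i \<longleftrightarrow> i < length w \<and> w ! i \<in> calls A \<and> \<not> (\<exists>j. matched A w i j)"

definition pending_ret :: "'a vpalph \<Rightarrow> 'a list \<Rightarrow> nat \<Rightarrow> bool" where
  "pending_ret A w j \<longleftrightarrow> j < length w \<and> w ! j \<in> rets A \<and> \<not> (\<exists>i. matched A w i j)"

definition well_matched :: "'a vpalph \<Rightarrow> 'a list \<Rightarrow> bool" where
  "well_matched A w \<longleftrightarrow> (\<forall>i. \<not> pending_call A w i) \<and> (\<forall>j. \<not> pending_ret A w j)"

definition well_nested :: "'a vpalph \<Rightarrow> 'a vpalph \<Rightarrow> 'a list \<Rightarrow> bool" where
  "well_nested A1 A2 w \<longleftrightarrow> (\<forall>i j. matched (vp_union A1 A2) w i j \<longrightarrow>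
     (w ! i \<in> letters A1 \<and> w ! j \<in> letters A1) \<or> (w ! i \<in> letters A2 \<and> w ! j \<in> letters A2))"

text \<open>States and stack symbols are natural numbers. The bottom symbol is
represented by None / the empty stack.\<close>
record 'a vpa =
  st :: "nat set"
  init :: "nat set"
  fin :: "nat set"
  gam :: "nat set"
  dcall :: "(nat \<times> 'a \<times> nat \<times> nat) set"       \<comment> \<open>(q, a, q', pushed symbol)\<close>
  dret :: "(nat \<times> 'a \<times> nat option \<times> nat) set" \<comment> \<open>(q, a, top (None = bottom), q')\<close>
  dint :: "(nat \<times> 'a \<times> nat) set"

definition vpa_wf :: "'a vpalph \<Rightarrow> 'a vpa \<Rightarrow> bool" where
  "vpa_wf A M \<longleftrightarrow> finite (st M) \<and> finite (gam M) \<and> init M \<subseteq> st M \<and> fin M \<subseteq> st M \<and>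
     (\<forall>(q,a,q',g) \<in> dcall M. q \<in> st M \<and> a \<in> calls A \<and> q' \<in> st M \<and> g \<in> gam M) \<and>
     (\<forall>(q,a,g,q') \<in> dret M. q \<in> st M \<and> a \<in> rets A \<and> q' \<in> st M \<and> (\<forall>x. g = Some x \<longrightarrow> x \<in> gam M)) \<and>
     (\<forall>(q,a,q') \<in> dint M. q \<in> st M \<and> a \<in> ints A \<and> q' \<in> st M)"

definition vpa_step :: "'a vpalph \<Rightarrow> 'a vpa \<Rightarrow> nat \<times> nat list \<Rightarrow> 'a \<Rightarrow> nat \<times> nat list \<Rightarrow> bool" where
  "vpa_step A M c a c' \<longleftrightarrow>
    (case c of (q, s) \<Rightarrow> case c' of (q', s') \<Rightarrow>
      (a \<in> calls A \<and> (\<exists>g. (q, a, q', g) \<in> dcall M \<and> s' = g # s)) \<or>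
      (a \<in> rets A \<and> ((s = [] \<and> s' = [] \<and> (q, a, None, q') \<in> dret M) \<or>
                     (\<exists>g. s = g # s' \<and> (q, a, Some g, q') \<in> dret M))) \<or>
      (a \<in> ints A \<and> (q, a, q') \<in> dint M \<and> s' = s))"

fun vpa_reach :: "'a vpalph \<Rightarrow> 'a vpa \<Rightarrow> nat \<times> nat list \<Rightarrow> 'a list \<Rightarrow> nat \<times> nat list \<Rightarrow> bool" where
  "vpa_reach A M c [] c' \<longleftrightarrow> c' = c"
| "vpa_reach A M c (a # w) c' \<longleftrightarrow> (\<exists>c''. vpa_step A M c a c'' \<and> vpa_reach A M c'' w c')"

definition vpa_lang :: "'a vpalph \<Rightarrow> 'a vpa \<Rightarrow> 'a list set" where
  "vpa_lang A M = {w. \<exists>q0 \<in> init M. \<exists>q s. vpa_reach A M (q0, []) w (q, s) \<and> q \<in> fin M}"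

definition is_VPL :: "'a vpalph \<Rightarrow> 'a list set \<Rightarrow> bool" where
  "is_VPL A L \<longleftrightarrow> (\<exists>M. vpa_wf A M \<and> vpa_lang A M = L)"

definition det_complete :: "'a vpalph \<Rightarrow> 'a vpa \<Rightarrow> bool" where
  "det_complete A M \<longleftrightarrow> vpa_wf A M \<and> (\<exists>q0. init M = {q0}) \<and>
     (\<forall>q \<in> st M. \<forall>a \<in> calls A. \<exists>!p. (q, a, p) \<in> dcall M) \<and>
     (\<forall>q \<in> st M. \<forall>a \<in> rets A. \<forall>g \<in> insert None (Some ` gam M). \<exists>!q'. (q, a, g, q') \<in> dret M) \<and>
     (\<forall>q \<in> st M. \<forall>a \<in> ints A. \<exists>!q'. (q, a, q') \<in> dint M)"

definition shuffle :: "'a vpalph \<Rightarrow> 'a vpalph \<Rightarrow> 'a list set \<Rightarrow> 'a list set \<Rightarrow> 'a list set" where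
  "shuffle A1 A2 P1 P2 = {w \<in> lists (letters (vp_union A1 A2)).
     filter (\<lambda>x. x \<in> letters A1) w \<in> P1 \<and> filter (\<lambda>x. x \<in> letters A2) w \<in> P2}"

definition indep :: "'a vpalph \<Rightarrow> 'a vpalph \<Rightarrow> 'a \<Rightarrow> 'a \<Rightarrow> bool" where
  "indep A1 A2 a b \<longleftrightarrow> (a \<in> letters A1 \<and> b \<in> letters A2) \<or> (a \<in> letters A2 \<and> b \<in> letters A1)"

definition swap_step :: "'a vpalph \<Rightarrow> 'a vpalph \<Rightarrow> 'a list \<Rightarrow> 'a list \<Rightarrow> bool" where
  "swap_step A1 A2 x y \<longleftrightarrow> (\<exists>u a b v. indep A1 A2 a b \<and> x = u @ a # b # v \<and> y = u @ b # a # v)"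

definition equivI :: "'a vpalph \<Rightarrow> 'a vpalph \<Rightarrow> 'a list \<Rightarrow> 'a list \<Rightarrow> bool" where
  "equivI A1 A2 = (swap_step A1 A2)\<^sup>*\<^sup>*"

definition strict_total_on :: "'a set \<Rightarrow> ('a \<Rightarrow> 'a \<Rightarrow> bool) \<Rightarrow> bool" where
  "strict_total_on S r \<longleftrightarrow> (\<forall>x\<in>S. \<not> r x x) \<and>
     (\<forall>x\<in>S. \<forall>y\<in>S. \<forall>z\<in>S. r x y \<longrightarrow> r y z \<longrightarrow> r x z) \<and>
     (\<forall>x\<in>S. \<forall>y\<in>S. x \<noteq> y \<longrightarrow> r x y \<or> r y x)"

definition contextual_order :: "'a vpalph \<Rightarrow> ('a list \<Rightarrow> 'a \<Rightarrow> 'a \<Rightarrow> bool) \<Rightarrow> bool" where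
  "contextual_order A prec \<longleftrightarrow> (\<forall>w \<in> lists (letters A). strict_total_on (letters A) (prec w))"

definition ctx_le :: "('a list \<Rightarrow> 'a \<Rightarrow> 'a \<Rightarrow> bool) \<Rightarrow> 'a list \<Rightarrow> 'a list \<Rightarrow> bool" where
  "ctx_le prec \<sigma> \<rho> \<longleftrightarrow> (\<exists>t. \<rho> = \<sigma> @ t) \<or>
     (\<exists>\<alpha> a \<beta> b \<gamma>. \<sigma> = \<alpha> @ a # \<beta> \<and> \<rho> = \<alpha> @ b # \<gamma> \<and> prec \<alpha> a b)"

definition red :: "'a vpalph \<Rightarrow> 'a vpalph \<Rightarrow> ('a list \<Rightarrow> 'a \<Rightarrow> 'a \<Rightarrow> bool) \<Rightarrow> 'a list set \<Rightarrow> 'a list set" where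
  "red A1 A2 prec L = {w \<in> L. \<forall>u \<in> L. (equivI A1 A2 u w \<and> ctx_le prec u w) \<longrightarrow> u = w}"

definition vp_order :: "'a vpalph \<Rightarrow> ('a list \<Rightarrow> 'a \<Rightarrow> 'a \<Rightarrow> bool) \<Rightarrow> bool" where
  "vp_order A prec \<longleftrightarrow> (\<exists>M ord q0. det_complete A M \<and> init M = {q0} \<and>
     (\<forall>q \<in> st M. strict_total_on (letters A) (ord q)) \<and>
     (\<forall>w \<in> lists (letters A). \<forall>q s. vpa_reach A M (q0, []) w (q, s) \<longrightarrow> prec w = ord q))"

definition coherent1 :: "'a vpalph \<Rightarrow> 'a vpalph \<Rightarrow> ('a list \<Rightarrow> 'a \<Rightarrow> 'a \<Rightarrow> bool) \<Rightarrow> bool" where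
  "coherent1 Ai Aj prec \<longleftrightarrow> (\<forall>u \<in> lists (letters (vp_union Ai Aj)).
     (\<exists>i. pending_call (vp_union Ai Aj) u i \<and>
          (\<forall>k. pending_call (vp_union Ai Aj) u k \<longrightarrow> k \<le> i) \<and> u ! i \<in> calls Ai)
     \<longrightarrow> (\<forall>a \<in> letters Ai. \<forall>r \<in> rets Aj. prec u a r))"

definition coherent :: "'a vpalph \<Rightarrow> 'a vpalph \<Rightarrow> ('a list \<Rightarrow> 'a \<Rightarrow> 'a \<Rightarrow> bool) \<Rightarrow> bool" where
  "coherent A1 A2 prec \<longleftrightarrow> coherent1 A1 A2 prec \<and> coherent1 A2 A1 prec"

end

theory Submission
  imports Defs
begin

(* A word of the shuffle is reduced iff it is locally reduced: every letter x lies above each letter y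
   of the maximal block of letters of the other component immediately preceding it, y <_al x in the
   context al in which y was read; otherwise moving x in front of y gives a smaller equivalent word
   of the shuffle.  This can be checked from left to right by keeping, for each component, the set
   of letters allowed next; updating these sets only needs the current order <_al, which the order
   automaton supplies.  Running it in parallel with automata for P1 and P2 on the two projections
   gives a VPA whose stack interleaves the two component stacks, each symbol tagged with its
   component.

   The tags are never wrong because reduced words are well-nested.  Suppose a return r of one
   component meets a pending call c of the other on top of the stack.  Since the projection on the
   component of c is well-matched, a letter y of that component follows r; take the first one.
   Local reducedness at y gives r <_u y for the prefix u before r, while coherence, applied to the
   last pending call c of u, gives y <_u r. *)

section \<open>Matched and pending calls\<close>

lemma snoc_eq_append_Cons_iff:
  "u @ [r] = u1 @ x # u2 \<longleftrightarrow> (u2 = [] \<and> u1 = u \<and> x = r) \<or> (\<exists>u2'. u2 = u2' @ [r] \<and> u = u1 @ x # u2')"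
  by (cases u2 rule: rev_cases) auto

fun depth :: "'a vpalph \<Rightarrow> 'a list \<Rightarrow> nat \<Rightarrow> nat option" where
  "depth A [] n = Some n"
| "depth A (x # v) n =
     (if x \<in> calls A then depth A v (Suc n)
      else if x \<in> rets A then (if n = 0 then None else depth A v (n - 1))
      else depth A v n)"

lemma depth_append: "depth A (u @ v) n = Option.bind (depth A u n) (depth A v)"
  by (induction u arbitrary: n) auto

lemma balanced_depth:
  assumes "calls A \<inter> rets A = {}" and "balanced A v"
  shows "depth A v n = Some n"
  using assms(2)
proof (induction arbitrary: n rule: balanced.induct)
  case (bal_nest c r u)
  then show ?case using assms(1) by (auto simp: depth_append)
qed (auto simp: depth_append)

lemma not_balanced_append_return:
  assumes "calls A \<inter> rets A = {}" and "balanced A v" and "r \<in> rets A"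
  shows "\<not> balanced A (v @ r # x)"
proof
  assume "balanced A (v @ r # x)"
  then have "depth A (v @ r # x) 0 = Some 0" using balanced_depth[OF assms(1)] by blast
  moreover have "r \<notin> calls A" using assms(1,3) by blast
  ultimately show False using balanced_depth[OF assms(1,2), of 0] assms(3) by (simp add: depth_append)
qed

lemma matchedI:
  assumes "c \<in> calls A" and "r \<in> rets A" and "balanced A v"
  shows "matched A (u @ c # v @ r # x) (length u) (Suc (length u + length v))"
  using assms by (simp add: matched_def nth_append)

lemma matched_iff_split:
  "matched A w i j \<longleftrightarrow> (\<exists>u c v r x. w = u @ c # v @ r # x \<and> i = length u \<and>
     j = Suc (length u + length v) \<and> c \<in> calls A \<and> r \<in> rets A \<and> balanced A v)"
proof
  assume m: "matched A w i j"
  define v where "v = take (j - i - 1) (drop (i + 1) w)"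
  have split: "w = take i w @ w ! i # v @ w ! j # drop (Suc j) w"
  proof -
    have "w = take i w @ w ! i # drop (Suc i) w"
      using m by (simp add: matched_def id_take_nth_drop)
    moreover have "drop (Suc i) w = v @ drop j w"
    proof -
      have "drop (j - i - 1) (drop (Suc i) w) = drop j w" using m by (simp add: matched_def)
      then show ?thesis
        using append_take_drop_id[of "j - i - 1" "drop (Suc i) w"] by (simp add: v_def)
    qed
    moreover have "drop j w = w ! j # drop (Suc j) w"
      using m by (simp add: matched_def Cons_nth_drop_Suc)
    ultimately show ?thesis by simp
  qed
  moreover have "i = length (take i w)" "j = Suc (length (take i w) + length v)"
    using m by (auto simp: matched_def v_def)
  moreover have "balanced A v" using m by (simp add: matched_def v_def)
  ultimately show "\<exists>u c v r x. w = u @ c # v @ r # x \<and> i = length u \<and>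
     j = Suc (length u + length v) \<and> c \<in> calls A \<and> r \<in> rets A \<and> balanced A v"
    using m unfolding matched_def by blast
next
  assume "\<exists>u c v r x. w = u @ c # v @ r # x \<and> i = length u \<and>
     j = Suc (length u + length v) \<and> c \<in> calls A \<and> r \<in> rets A \<and> balanced A v"
  then show "matched A w i j" by (auto intro!: matchedI)
qed

lemma matched_append_context:
  "matched A v i j \<Longrightarrow> matched A (p @ v @ q) (length p + i) (length p + j)"
proof -
  assume "matched A v i j"
  then obtain u c v' r x where "v = u @ c # v' @ r # x" "i = length u" "j = Suc (length u + length v')"
    "c \<in> calls A" "r \<in> rets A" "balanced A v'"
    unfolding matched_iff_split by blast
  then show ?thesis using matchedI[of c A r v' "p @ u" "x @ q"] by (simp add: add.assoc)
qed

lemma balanced_call_matched: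
  assumes "calls A \<inter> rets A = {}" and "balanced A v" and "k < length v" and "v ! k \<in> calls A"
  shows "\<exists>j. matched A v k j"
  using assms(2-)
proof (induction arbitrary: k rule: balanced.induct)
  case (bal_app u v)
  show ?case
  proof (cases "k < length u")
    case True
    then obtain j where "matched A u k j"
      using bal_app.IH(1)[of k] bal_app.prems by (auto simp: nth_append)
    then show ?thesis using matched_append_context[of A u k j "[]" v] by auto
  next
    case False
    have "k - length u < length v" using bal_app.prems False by simp
    then obtain j where "matched A v (k - length u) j"
      using bal_app.IH(2)[of "k - length u"] bal_app.prems False by (auto simp: nth_append)
    then have "matched A (u @ v @ []) (length u + (k - length u)) (length u + j)"
      by (rule matched_append_context)
    then show ?thesis using False by auto
  qed
next
  case (bal_nest c r u)
  show ?case
  proof (cases k)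
    case 0
    have "matched A ([] @ c # u @ r # []) 0 (Suc (length u))"
      using matchedI[of c A r u "[]"] bal_nest by simp
    then show ?thesis using 0 by auto
  next
    case (Suc k')
    have "k' < length u" using bal_nest Suc assms(1) by (auto simp: nth_append split: if_splits)
    then obtain j where "matched A u k' j" using bal_nest Suc by (auto simp: nth_append)
    then show ?thesis using matched_append_context[of A u k' j "[c]" "[r]"] Suc by auto
  qed
qed auto

definition stack_step :: "'a vpalph \<Rightarrow> 'a list \<Rightarrow> 'a \<Rightarrow> 'a list" where
  "stack_step A s x = (if x \<in> calls A then x # s else if x \<in> rets A then tl s else s)"

definition call_stack :: "'a vpalph \<Rightarrow> 'a list \<Rightarrow> 'a list" where
  "call_stack A v = foldl (stack_step A) [] v"

lemma call_stack_Nil [simp]: "call_stack A [] = []"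
  by (simp add: call_stack_def)

lemma call_stack_snoc [simp]: "call_stack A (v @ [x]) = stack_step A (call_stack A v) x"
  by (simp add: call_stack_def)

lemma call_stack_subset_calls: "set (call_stack A v) \<subseteq> calls A"
proof (induction v rule: rev_induct)
  case (snoc x v)
  then show ?case by (cases "call_stack A v") (auto simp: stack_step_def)
qed simp

lemma foldl_stack_step_balanced:
  assumes "calls A \<inter> rets A = {}" and "balanced A v"
  shows "foldl (stack_step A) s v = s"
  using assms(2) by (induction arbitrary: s rule: balanced.induct) (use assms(1) in \<open>auto simp: stack_step_def\<close>)

lemma call_stack_push_balanced:
  assumes "calls A \<inter> rets A = {}" and "c \<in> calls A" and "balanced A v"
  shows "call_stack A (u @ c # v) = c # call_stack A u"
  using foldl_stack_step_balanced[OF assms(1,3)] assms(2)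
  by (simp add: call_stack_def stack_step_def)

lemma call_stack_Cons_split:
  "call_stack A v = c # t \<Longrightarrow>
     \<exists>v1 v2. v = v1 @ c # v2 \<and> c \<in> calls A \<and> balanced A v2 \<and> call_stack A v1 = t"
proof (induction "length v" arbitrary: v c t rule: less_induct)
  case less
  show ?case
  proof (cases v rule: rev_cases)
    case Nil
    then show ?thesis using less.prems by simp
  next
    case (snoc v' x)
    consider (call) "x \<in> calls A" | (ret) "x \<notin> calls A" "x \<in> rets A"
      | (int) "x \<notin> calls A" "x \<notin> rets A"
      by blast
    then show ?thesis
    proof cases
      case call
      then show ?thesis using less.prems snoc
        by (intro exI[of _ v'] exI[of _ "[]"]) (auto simp: stack_step_def intro: bal_nil)
    next
      case ret
      then obtain c' where "call_stack A v' = c' # c # t"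
        using less.prems snoc by (cases "call_stack A v'") (auto simp: stack_step_def)
      then obtain w1 w2 where w: "v' = w1 @ c' # w2" "c' \<in> calls A" "balanced A w2"
        "call_stack A w1 = c # t"
        using less.hyps[of v' c' "c # t"] snoc by auto
      then obtain v1 v2 where "w1 = v1 @ c # v2" "c \<in> calls A" "balanced A v2" "call_stack A v1 = t"
        using less.hyps[of w1 c t] snoc by auto
      moreover have "balanced A (v2 @ c' # w2 @ [x])"
        using bal_app[OF \<open>balanced A v2\<close> bal_nest[OF w(2) ret(2) w(3)]] by simp
      ultimately show ?thesis using snoc w(1)
        by (intro exI[of _ v1] exI[of _ "v2 @ c' # w2 @ [x]"]) auto
    next
      case int
      then have "call_stack A v' = c # t" using less.prems snoc by (simp add: stack_step_def)
      then obtain v1 v2 where "v' = v1 @ c # v2" "c \<in> calls A" "balanced A v2" "call_stack A v1 = t"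
        using less.hyps[of v' c t] snoc by auto
      moreover have "balanced A (v2 @ [x])"
        using bal_app[OF \<open>balanced A v2\<close> bal_int[OF int]] .
      ultimately show ?thesis using snoc by (intro exI[of _ v1] exI[of _ "v2 @ [x]"]) auto
    qed
  qed
qed

lemma call_stack_top_last_pending:
  assumes "calls A \<inter> rets A = {}" and "call_stack A u = c # t"
  shows "\<exists>i. pending_call A u i \<and> (\<forall>k. pending_call A u k \<longrightarrow> k \<le> i) \<and> u ! i = c"
proof -
  obtain v1 v2 where u: "u = v1 @ c # v2" and c: "c \<in> calls A" and v2: "balanced A v2"
    using call_stack_Cons_split[OF assms(2)] by blast
  have "\<not> matched A u (length v1) j" for j
  proof
    assume "matched A u (length v1) j"
    then obtain v r x where "v2 = v @ r # x" "r \<in> rets A" "balanced A v"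
      unfolding matched_iff_split u by (auto simp: append_eq_append_conv)
    then show False using not_balanced_append_return[OF assms(1)] v2 by blast
  qed
  then have "pending_call A u (length v1)"
    using c by (simp add: pending_call_def u)
  moreover have "k \<le> length v1" if "pending_call A u k" for k
  proof (rule ccontr)
    assume "\<not> k \<le> length v1"
    then have k: "k - Suc (length v1) < length v2" "v2 ! (k - Suc (length v1)) \<in> calls A"
      using that by (auto simp: pending_call_def u nth_append)
    obtain j where "matched A v2 (k - Suc (length v1)) j"
      using balanced_call_matched[OF assms(1) v2 k] by blast
    then have "matched A ((v1 @ [c]) @ v2 @ []) (length (v1 @ [c]) + (k - Suc (length v1)))
        (length (v1 @ [c]) + j)"
      by (rule matched_append_context)
    moreover have "length (v1 @ [c]) + (k - Suc (length v1)) = k"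
      using \<open>\<not> k \<le> length v1\<close> by simp
    ultimately show False using that by (auto simp: pending_call_def u)
  qed
  ultimately show ?thesis by (auto simp: u)
qed

lemma well_matched_call_stack:
  assumes "calls A \<inter> rets A = {}" and "well_matched A v"
  shows "call_stack A v = []"
proof (rule ccontr)
  assume "call_stack A v \<noteq> []"
  then obtain c t where "call_stack A v = c # t" by (cases "call_stack A v") auto
  then obtain i where "pending_call A v i"
    using call_stack_top_last_pending[OF assms(1)] by blast
  then show False using assms(2) by (auto simp: well_matched_def)
qed

section \<open>Reduced words of a shuffle\<close>

lemma vp_union_commute: "vp_union A B = vp_union B A"
  by (simp add: vp_union_def Un_commute)

lemma calls_vp_union [simp]: "calls (vp_union A B) = calls A \<union> calls B"
  and rets_vp_union [simp]: "rets (vp_union A B) = rets A \<union> rets B"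
  and ints_vp_union [simp]: "ints (vp_union A B) = ints A \<union> ints B"
  by (simp_all add: vp_union_def calls_def rets_def ints_def)

lemma letters_vp_union [simp]: "letters (vp_union A B) = letters A \<union> letters B"
  by (auto simp: letters_def)

lemma vp_alphabet_kinds_disjoint:
  "vp_alphabet A \<Longrightarrow> calls A \<inter> rets A = {} \<and> calls A \<inter> ints A = {} \<and> rets A \<inter> ints A = {}"
  by (simp add: vp_alphabet_def)

lemma strict_total_on_irrefl: "strict_total_on S r \<Longrightarrow> x \<in> S \<Longrightarrow> \<not> r x x"
  and strict_total_on_asym: "strict_total_on S r \<Longrightarrow> x \<in> S \<Longrightarrow> y \<in> S \<Longrightarrow> r x y \<Longrightarrow> \<not> r y x"
  and strict_total_on_total: "strict_total_on S r \<Longrightarrow> x \<in> S \<Longrightarrow> y \<in> S \<Longrightarrow> x \<noteq> y \<Longrightarrow> r x y \<or> r y x"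
  unfolding strict_total_on_def by blast+

abbreviation proj :: "'a vpalph \<Rightarrow> 'a list \<Rightarrow> 'a list" where
  "proj B \<equiv> filter (\<lambda>x. x \<in> letters B)"

lemma equivI_length: "equivI A1 A2 u w \<Longrightarrow> length u = length w"
  unfolding equivI_def
  by (induction rule: rtranclp_induct) (auto simp: swap_step_def)

lemma equivI_proj:
  assumes "letters A1 \<inter> letters A2 = {}" and "equivI A1 A2 u w" and "B = A1 \<or> B = A2"
  shows "proj B u = proj B w \<and> set u = set w"
  using assms(2) unfolding equivI_def
proof (induction rule: rtranclp_induct)
  case (step v w)
  then show ?case using assms(1,3) by (auto simp: swap_step_def indep_def)
qed simp

lemma equivI_move_past:
  assumes "\<forall>y \<in> set be. indep A1 A2 x y"
  shows "equivI A1 A2 (al @ x # be @ ga) (al @ be @ x # ga)"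
  using assms
proof (induction be arbitrary: al)
  case Nil
  then show ?case by (simp add: equivI_def)
next
  case (Cons b be)
  have "swap_step A1 A2 (al @ x # b # be @ ga) ((al @ [b]) @ x # be @ ga)"
    unfolding swap_step_def using Cons.prems by auto
  moreover have "equivI A1 A2 ((al @ [b]) @ x # be @ ga) ((al @ [b]) @ be @ x # ga)"
    using Cons.IH[of "al @ [b]"] Cons.prems by simp
  ultimately show ?case
    unfolding equivI_def by (simp add: converse_rtranclp_into_rtranclp)
qed

lemma ctx_le_lexI: "prec al a b \<Longrightarrow> ctx_le prec (al @ a # be) (al @ b # ga)"
  unfolding ctx_le_def by blast

locale shuffle_setting =
  fixes A1 A2 :: "'a vpalph" and prec :: "'a list \<Rightarrow> 'a \<Rightarrow> 'a \<Rightarrow> bool"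
  assumes vp_alphabet_A1: "vp_alphabet A1" and vp_alphabet_A2: "vp_alphabet A2"
    and letters_disjoint: "letters A1 \<inter> letters A2 = {}"
    and contextual_order_prec: "contextual_order (vp_union A1 A2) prec"
begin

abbreviation U :: "'a vpalph" where "U \<equiv> vp_union A1 A2"
abbreviation L :: "'a set" where "L \<equiv> letters U"

definition component :: "bool \<Rightarrow> 'a vpalph" where
  "component i = (if i then A1 else A2)"

definition side :: "'a \<Rightarrow> bool" where
  "side x \<longleftrightarrow> x \<in> letters A1"

lemma component_cases: "component i = A1 \<or> component i = A2"
  by (simp add: component_def)

lemma letters_component_iff: "x \<in> L \<Longrightarrow> x \<in> letters (component i) \<longleftrightarrow> side x = i"
  using letters_disjoint by (auto simp: component_def side_def)

lemma letters_component_side: "x \<in> L \<Longrightarrow> x \<in> letters (component (side x))"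
  by (simp add: letters_component_iff)

lemma letters_component_subset: "letters (component i) \<subseteq> L"
  by (auto simp: component_def)

lemma kinds_component:
  assumes "x \<in> letters (component i)"
  shows "x \<in> calls U \<longleftrightarrow> x \<in> calls (component i)"
    and "x \<in> rets U \<longleftrightarrow> x \<in> rets (component i)"
    and "x \<in> ints U \<longleftrightarrow> x \<in> ints (component i)"
  using assms letters_disjoint by (auto simp: component_def letters_def split: if_splits)

lemma vp_alphabet_component: "vp_alphabet (component i)"
  by (simp add: component_def vp_alphabet_A1 vp_alphabet_A2)

lemma kinds_disjoint_U: "calls U \<inter> rets U = {}" "calls U \<inter> ints U = {}" "rets U \<inter> ints U = {}"
  using vp_alphabet_kinds_disjoint[OF vp_alphabet_A1] vp_alphabet_kinds_disjoint[OF vp_alphabet_A2]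
    letters_disjoint
  by (auto simp: letters_def)

lemma kinds_of_call:
  assumes "x \<in> calls U"
  shows "x \<in> L \<and> x \<in> calls (component (side x)) \<and>
     x \<notin> rets U \<and> x \<notin> rets (component (side x)) \<and> x \<notin> ints U \<and> x \<notin> ints (component (side x))"
proof -
  have xL: "x \<in> L" using assms by (auto simp: letters_def)
  have "x \<notin> rets U" "x \<notin> ints U" using assms kinds_disjoint_U by auto
  then show ?thesis using assms xL kinds_component[OF letters_component_side[OF xL]] by blast
qed

lemma kinds_of_ret:
  assumes "x \<in> rets U"
  shows "x \<in> L \<and> x \<in> rets (component (side x)) \<and>
     x \<notin> calls U \<and> x \<notin> calls (component (side x)) \<and> x \<notin> ints U \<and> x \<notin> ints (component (side x))"
proof -
  have xL: "x \<in> L" using assms by (auto simp: letters_def)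
  have "x \<notin> calls U" "x \<notin> ints U" using assms kinds_disjoint_U by auto
  then show ?thesis using assms xL kinds_component[OF letters_component_side[OF xL]] by blast
qed

lemma kinds_of_int:
  assumes "x \<in> ints U"
  shows "x \<in> L \<and> x \<in> ints (component (side x)) \<and>
     x \<notin> calls U \<and> x \<notin> calls (component (side x)) \<and> x \<notin> rets U \<and> x \<notin> rets (component (side x))"
proof -
  have xL: "x \<in> L" using assms by (auto simp: letters_def)
  have "x \<notin> calls U" "x \<notin> rets U" using assms kinds_disjoint_U by auto
  then show ?thesis using assms xL kinds_component[OF letters_component_side[OF xL]] by blast
qed

lemma finite_L: "finite L"
  using vp_alphabet_A1 vp_alphabet_A2 by (simp add: vp_alphabet_def)

lemma prec_strict_total: "al \<in> lists L \<Longrightarrow> strict_total_on L (prec al)"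
  using contextual_order_prec by (simp add: contextual_order_def)

lemma indep_component:
  "x \<in> letters (component i) \<Longrightarrow> y \<in> L \<Longrightarrow> y \<notin> letters (component i) \<Longrightarrow> indep A1 A2 x y"
  by (auto simp: indep_def component_def split: if_splits)

lemma proj_component_eq:
  "equivI A1 A2 u w \<Longrightarrow> proj (component i) u = proj (component i) w"
  using equivI_proj[OF letters_disjoint] component_cases by blast

lemma proj_component_Cons:
  "x \<in> L \<Longrightarrow> proj (component i) (x # v) =
     (if side x = i then x # proj (component i) v else proj (component i) v)"
  by (simp add: letters_component_iff)

lemma shuffle_iff: "w \<in> shuffle A1 A2 P1 P2 \<longleftrightarrow> w \<in> lists L \<and> proj A1 w \<in> P1 \<and> proj A2 w \<in> P2"
  by (simp add: shuffle_def)

lemma shuffle_equivI: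
  "equivI A1 A2 u w \<Longrightarrow> w \<in> shuffle A1 A2 P1 P2 \<Longrightarrow> u \<in> shuffle A1 A2 P1 P2"
proof -
  assume eq: "equivI A1 A2 u w" and w: "w \<in> shuffle A1 A2 P1 P2"
  have "proj A1 u = proj A1 w" "proj A2 u = proj A2 w" "set u = set w"
    using equivI_proj[OF letters_disjoint eq] by blast+
  then show ?thesis using w by (simp add: shuffle_iff in_lists_conv_set)
qed

(* A letter b of component B that follows al can be swapped to the left across the trailing block of
   letters of al outside B; in a reduced word it must therefore lie above each letter y of that
   block, in the order of the context al1 in which y was read. *)
definition admissible :: "'a vpalph \<Rightarrow> 'a list \<Rightarrow> 'a set" where
  "admissible B al = {b \<in> L. \<forall>al1 y g. al = al1 @ y # g \<longrightarrow> y \<notin> letters B \<longrightarrow>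
     set g \<inter> letters B = {} \<longrightarrow> prec al1 y b}"

definition locally_reduced :: "'a list \<Rightarrow> bool" where
  "locally_reduced w \<longleftrightarrow> (\<forall>u x v. w = u @ x # v \<longrightarrow> x \<in> admissible (component (side x)) u)"

lemma locally_reducedD: "locally_reduced (u @ x # v) \<Longrightarrow> x \<in> admissible (component (side x)) u"
  unfolding locally_reduced_def by blast

lemma admissible_Nil [simp]: "admissible B [] = L"
  by (auto simp: admissible_def)

lemma admissible_snoc:
  "admissible B (al @ [x]) = (if x \<in> letters B then L else admissible B al \<inter> {b. prec al x b})"
  by (auto simp: admissible_def snoc_eq_append_Cons_iff)

lemma admissibleD:
  "b \<in> admissible B (al @ y # g) \<Longrightarrow> y \<notin> letters B \<Longrightarrow> set g \<inter> letters B = {} \<Longrightarrow> prec al y b"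
  by (simp add: admissible_def)

lemma red_locally_reduced:
  assumes red: "w \<in> red A1 A2 prec (shuffle A1 A2 P1 P2)"
  shows "locally_reduced w"
  unfolding locally_reduced_def
proof (intro allI impI)
  fix u x v
  assume w: "w = u @ x # v"
  let ?B = "component (side x)"
  have ws: "w \<in> shuffle A1 A2 P1 P2" using red by (simp add: red_def)
  then have wL: "w \<in> lists L" by (simp add: shuffle_iff)
  then have xL: "x \<in> L" and uL: "u \<in> lists L" and vL: "v \<in> lists L" using w by auto
  have xB: "x \<in> letters ?B" using letters_component_side[OF xL] .
  show "x \<in> admissible ?B u"
  proof (rule ccontr)
    assume "x \<notin> admissible ?B u"
    then obtain al y g where u: "u = al @ y # g" and y: "y \<notin> letters ?B"
      and g: "set g \<inter> letters ?B = {}" and not_yx: "\<not> prec al y x"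
      using xL unfolding admissible_def by blast
    have alL: "al \<in> lists L" and yL: "y \<in> L" and gL: "g \<in> lists L" using uL u by auto
    define w' where "w' = al @ x # (y # g) @ v"
    have "\<forall>z \<in> set (y # g). indep A1 A2 x z"
      using indep_component[OF xB] y g yL gL by auto
    then have eq: "equivI A1 A2 w' w"
      using equivI_move_past[of "y # g" A1 A2 x al v] by (simp add: w'_def w u)
    have "x \<noteq> y" using xB y by blast
    then have "prec al x y"
      using strict_total_on_total[OF prec_strict_total[OF alL] xL yL] not_yx by blast
    then have "ctx_le prec w' w"
      using ctx_le_lexI[of prec al x y "(y # g) @ v" "g @ x # v"] by (simp add: w'_def w u)
    then have "w' = w"
      using red eq shuffle_equivI[OF eq ws] unfolding red_def by blast
    then show False using \<open>x \<noteq> y\<close> by (simp add: w'_def w u)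
  qed
qed

lemma locally_reduced_red:
  assumes ws: "w \<in> shuffle A1 A2 P1 P2" and lr: "locally_reduced w"
  shows "w \<in> red A1 A2 prec (shuffle A1 A2 P1 P2)"
  unfolding red_def
proof (intro CollectI conjI ballI impI ws)
  fix u
  assume us: "u \<in> shuffle A1 A2 P1 P2" and "equivI A1 A2 u w \<and> ctx_le prec u w"
  then have eq: "equivI A1 A2 u w" and le: "ctx_le prec u w" by auto
  have wL: "w \<in> lists L" and uL: "u \<in> lists L" using ws us by (auto simp: shuffle_iff)
  from le consider (prefix) t where "w = u @ t"
    | (lex) al a be b ga where "u = al @ a # be" "w = al @ b # ga" "prec al a b"
    unfolding ctx_le_def by blast
  then show "u = w"
  proof cases
    case prefix
    then show ?thesis using equivI_length[OF eq] by simp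
  next
    case lex
    let ?B = "component (side a)"
    have alL: "al \<in> lists L" and aL: "a \<in> L" and bL: "b \<in> L" using lex uL wL by auto
    have aB: "a \<in> letters ?B" using letters_component_side[OF aL] .
    have proj_eq: "a # proj ?B be = proj ?B (b # ga)"
      using proj_component_eq[OF eq, of "side a"] lex aB by simp
    show ?thesis
    proof (cases "b \<in> letters ?B")
      case True
      then show ?thesis
        using proj_eq lex strict_total_on_irrefl[OF prec_strict_total[OF alL] aL] by simp
    next
      case False
      then have "proj ?B ga = a # proj ?B be" using proj_eq by simp
      then obtain g1 g2 where ga: "ga = g1 @ a # g2" and g1: "\<forall>z \<in> set g1. z \<notin> letters ?B"
        by (auto dest: filter_eq_ConsD)
      have "a \<in> admissible ?B (al @ b # g1)"
        using lr lex(2) ga unfolding locally_reduced_def by simp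
      then have "prec al b a" using False g1 by (auto intro: admissibleD)
      then show ?thesis
        using strict_total_on_asym[OF prec_strict_total[OF alL] aL bL] lex by blast
    qed
  qed
qed

lemma red_shuffle_eq:
  "red A1 A2 prec (shuffle A1 A2 P1 P2) = {w \<in> shuffle A1 A2 P1 P2. locally_reduced w}"
  using red_locally_reduced locally_reduced_red by (auto simp: red_def)

section \<open>Reduced words are well-nested\<close>

lemma vp_union_component: "vp_union (component i) (component (\<not> i)) = U"
  by (cases i) (simp_all add: component_def vp_union_commute)

lemma coherent1_component:
  "coherent A1 A2 prec \<Longrightarrow> coherent1 (component i) (component (\<not> i)) prec"
  by (cases i) (simp_all add: coherent_def component_def)

definition returns_matched :: "'a list \<Rightarrow> bool" where
  "returns_matched u \<longleftrightarrow> (\<forall>u1 r u2. u = u1 @ r # u2 \<longrightarrow> r \<in> rets U \<longrightarrow>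
     call_stack U u1 = [] \<or> side (hd (call_stack U u1)) = side r)"

lemma returns_matched_Nil [simp]: "returns_matched []"
  by (simp add: returns_matched_def)

lemma returns_matchedD:
  "returns_matched (u1 @ r # u2) \<Longrightarrow> r \<in> rets U \<Longrightarrow>
     call_stack U u1 = [] \<or> side (hd (call_stack U u1)) = side r"
  unfolding returns_matched_def by blast

lemma returns_matched_snoc:
  "returns_matched (u @ [r]) \<longleftrightarrow> returns_matched u \<and>
     (r \<in> rets U \<longrightarrow> call_stack U u = [] \<or> side (hd (call_stack U u)) = side r)"
  unfolding returns_matched_def snoc_eq_append_Cons_iff by blast

lemma returns_matched_appendD: "returns_matched (u @ v) \<Longrightarrow> returns_matched u"
  unfolding returns_matched_def by fastforce

lemma proj_call_stack:
  assumes "u \<in> lists L" and "returns_matched u"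
  shows "proj (component i) (call_stack U u) = call_stack (component i) (proj (component i) u)"
  using assms
proof (induction u rule: rev_induct)
  case (snoc x u)
  let ?B = "component i" and ?s = "call_stack U u"
  have xL: "x \<in> L" and IH: "proj ?B ?s = call_stack ?B (proj ?B u)"
    using snoc by (auto simp: returns_matched_snoc)
  have sL: "set ?s \<subseteq> L"
    using call_stack_subset_calls[of U u] by (auto simp: letters_def)
  have pop: "proj ?B (tl ?s) = (if x \<in> letters ?B then tl (proj ?B ?s) else proj ?B ?s)"
    if "x \<in> rets U"
  proof (cases ?s)
    case (Cons c t)
    then have "side c = side x" using snoc.prems that by (auto simp: returns_matched_snoc)
    then have "c \<in> letters ?B \<longleftrightarrow> x \<in> letters ?B"
      using Cons sL xL letters_component_iff by auto
    then show ?thesis using Cons by auto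
  qed simp
  show ?case
  proof (cases "x \<in> letters ?B")
    case True
    then show ?thesis using IH pop kinds_component[OF True] by (auto simp: stack_step_def)
  next
    case False
    then show ?thesis using IH pop by (auto simp: stack_step_def)
  qed
qed simp

lemma no_crossing_return:
  assumes wL: "w \<in> lists L" and lr: "locally_reduced w"
    and wm: "well_matched (component i) (proj (component i) w)"
    and coh: "coherent A1 A2 prec"
    and w: "w = u @ r # v" and r: "r \<in> rets U" and rm: "returns_matched u"
    and stack: "call_stack U u = c # t" and side_c: "side c = i" and side_r: "side r \<noteq> i"
  shows False
proof -
  let ?B = "component i" and ?B' = "component (\<not> i)"
  have uL: "u \<in> lists L" and rL: "r \<in> L" using wL w by auto
  have cL: "c \<in> L" and cU: "c \<in> calls U"
    using call_stack_subset_calls[of U u] stack by (auto simp: letters_def)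
  have cB: "c \<in> letters ?B" using letters_component_iff[OF cL] side_c by simp
  have rB: "r \<notin> letters ?B" and rB': "r \<in> letters ?B'"
    using letters_component_iff[OF rL] side_r by auto
  have "\<exists>y \<in> set v. y \<in> letters ?B"
  proof (rule ccontr)
    assume "\<not> (\<exists>y \<in> set v. y \<in> letters ?B)"
    then have "proj ?B w = proj ?B u" using w rB by (simp add: filter_empty_conv)
    then have "call_stack ?B (proj ?B u) = []"
      using well_matched_call_stack[OF _ wm] vp_alphabet_kinds_disjoint[OF vp_alphabet_component]
      by simp
    then show False using proj_call_stack[OF uL rm, of i] stack cB by simp
  qed
  then obtain p y q where v: "v = p @ y # q" and yB: "y \<in> letters ?B"
    and p: "\<forall>z \<in> set p. z \<notin> letters ?B"
    using split_list_first_prop[of v "\<lambda>y. y \<in> letters ?B"] by blast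
  have yL: "y \<in> L" and side_y: "side y = i"
    using yB letters_component_subset letters_component_iff by blast+
  have "y \<in> admissible ?B (u @ r # p)"
    using locally_reducedD[of "u @ r # p" y q] lr w v side_y by simp
  then have ry: "prec u r y" using rB p by (auto intro: admissibleD)
  obtain k where "pending_call U u k" "\<forall>k'. pending_call U u k' \<longrightarrow> k' \<le> k" "u ! k = c"
    using call_stack_top_last_pending[OF kinds_disjoint_U(1) stack] by blast
  moreover have "c \<in> calls ?B" using kinds_component(1)[OF cB] cU by simp
  ultimately have "\<forall>a \<in> letters ?B. \<forall>r' \<in> rets ?B'. prec u a r'"
    using coherent1_component[OF coh, of i] uL unfolding coherent1_def vp_union_component
    by blast
  moreover have "r \<in> rets ?B'" using kinds_component(2)[OF rB'] r by simp
  ultimately have "prec u y r" using yB by blast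
  then show False
    using strict_total_on_asym[OF prec_strict_total[OF uL] rL yL] ry by blast
qed

lemma locally_reduced_returns_matched:
  assumes wL: "w \<in> lists L" and lr: "locally_reduced w"
    and wm: "\<And>i. well_matched (component i) (proj (component i) w)"
    and coh: "coherent A1 A2 prec"
  shows "returns_matched w"
proof -
  have "returns_matched (take n w)" for n
  proof (induction n)
    case (Suc n)
    show ?case
    proof (cases "n < length w")
      case True
      let ?u = "take n w" and ?r = "w ! n"
      have w: "w = ?u @ ?r # drop (Suc n) w" using True by (simp add: id_take_nth_drop)
      have "call_stack U ?u = [] \<or> side (hd (call_stack U ?u)) = side ?r" if r: "?r \<in> rets U"
      proof (rule ccontr)
        assume "\<not> ?thesis"
        then obtain c t where "call_stack U ?u = c # t" "side c \<noteq> side ?r"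
          by (cases "call_stack U ?u") auto
        then show False
          using no_crossing_return[OF wL lr wm coh w r Suc.IH] by blast
      qed
      then show ?thesis
        using Suc.IH True by (simp add: take_Suc_conv_app_nth returns_matched_snoc)
    qed (use Suc.IH in simp)
  qed simp
  from this[of "length w"] show ?thesis by simp
qed

lemma red_well_nested:
  assumes red: "w \<in> red A1 A2 prec (shuffle A1 A2 P1 P2)"
    and wm1: "\<forall>w \<in> P1. well_matched A1 w" and wm2: "\<forall>w \<in> P2. well_matched A2 w"
    and coh: "coherent A1 A2 prec"
  shows "well_nested A1 A2 w"
  unfolding well_nested_def
proof (intro allI impI)
  fix i j
  assume "matched U w i j"
  then obtain u c v r x where w: "w = u @ c # v @ r # x" and ij: "i = length u"
    "j = Suc (length u + length v)" and c: "c \<in> calls U" and r: "r \<in> rets U"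
    and v: "balanced U v"
    unfolding matched_iff_split by blast
  have ws: "w \<in> shuffle A1 A2 P1 P2" and lr: "locally_reduced w"
    using red red_shuffle_eq by auto
  have wL: "w \<in> lists L" using ws by (simp add: shuffle_iff)
  have "well_matched (component k) (proj (component k) w)" for k
    using ws wm1 wm2 by (cases k) (auto simp: shuffle_iff component_def)
  then have "returns_matched w"
    using locally_reduced_returns_matched[OF wL lr _ coh] by blast
  moreover have "call_stack U (u @ c # v) = c # call_stack U u"
    using call_stack_push_balanced[OF kinds_disjoint_U(1) c v] .
  ultimately have "side c = side r"
    using returns_matchedD[of "u @ c # v" r x] w r by simp
  moreover have "w ! i = c" "w ! j = r" using w ij by (auto simp: nth_append)
  moreover have "c \<in> L" "r \<in> L" using wL w by auto
  ultimately show "(w ! i \<in> letters A1 \<and> w ! j \<in> letters A1) \<or>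
      (w ! i \<in> letters A2 \<and> w ! j \<in> letters A2)"
    by (auto simp: side_def)
qed

end

section \<open>Automata with arbitrary states and stack symbols\<close>

record ('a, 's, 'g) gvpa =
  gst :: "'s set"
  ginit :: "'s set"
  gfin :: "'s set"
  ggam :: "'g set"
  gcall :: "('s \<times> 'a \<times> 's \<times> 'g) set"
  gret :: "('s \<times> 'a \<times> 'g option \<times> 's) set"
  gint :: "('s \<times> 'a \<times> 's) set"

definition gvpa_wf :: "'a vpalph \<Rightarrow> ('a, 's, 'g) gvpa \<Rightarrow> bool" where
  "gvpa_wf A G \<longleftrightarrow> finite (gst G) \<and> finite (ggam G) \<and> ginit G \<subseteq> gst G \<and> gfin G \<subseteq> gst G \<and>
     (\<forall>(q, a, q', g) \<in> gcall G. q \<in> gst G \<and> a \<in> calls A \<and> q' \<in> gst G \<and> g \<in> ggam G) \<and>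
     (\<forall>(q, a, g, q') \<in> gret G. q \<in> gst G \<and> a \<in> rets A \<and> q' \<in> gst G \<and> set_option g \<subseteq> ggam G) \<and>
     (\<forall>(q, a, q') \<in> gint G. q \<in> gst G \<and> a \<in> ints A \<and> q' \<in> gst G)"

definition gstep :: "'a vpalph \<Rightarrow> ('a, 's, 'g) gvpa \<Rightarrow> 's \<times> 'g list \<Rightarrow> 'a \<Rightarrow> 's \<times> 'g list \<Rightarrow> bool" where
  "gstep A G c a c' \<longleftrightarrow>
    (case c of (q, s) \<Rightarrow> case c' of (q', s') \<Rightarrow>
      (a \<in> calls A \<and> (\<exists>g. (q, a, q', g) \<in> gcall G \<and> s' = g # s)) \<or>
      (a \<in> rets A \<and> ((s = [] \<and> s' = [] \<and> (q, a, None, q') \<in> gret G) \<or>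
                     (\<exists>g. s = g # s' \<and> (q, a, Some g, q') \<in> gret G))) \<or>
      (a \<in> ints A \<and> (q, a, q') \<in> gint G \<and> s' = s))"

fun greach :: "'a vpalph \<Rightarrow> ('a, 's, 'g) gvpa \<Rightarrow> 's \<times> 'g list \<Rightarrow> 'a list \<Rightarrow> 's \<times> 'g list \<Rightarrow> bool" where
  "greach A G c [] c' \<longleftrightarrow> c' = c"
| "greach A G c (a # w) c' \<longleftrightarrow> (\<exists>c''. gstep A G c a c'' \<and> greach A G c'' w c')"

definition glang :: "'a vpalph \<Rightarrow> ('a, 's, 'g) gvpa \<Rightarrow> 'a list set" where
  "glang A G = {w. \<exists>q0 \<in> ginit G. \<exists>q s. greach A G (q0, []) w (q, s) \<and> q \<in> gfin G}"

lemma gstep_wf: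
  assumes "gvpa_wf A G" and "gstep A G (q, s) a (q', s')" and "q \<in> gst G" and "set s \<subseteq> ggam G"
  shows "q' \<in> gst G \<and> set s' \<subseteq> ggam G"
  using assms unfolding gstep_def gvpa_wf_def by fastforce

lemma greach_wf:
  assumes "gvpa_wf A G" and "greach A G (q, s) w (q', s')" and "q \<in> gst G" and "set s \<subseteq> ggam G"
  shows "q' \<in> gst G \<and> set s' \<subseteq> ggam G"
  using assms(2-)
proof (induction w arbitrary: q s)
  case (Cons a w)
  then obtain q1 s1 where "gstep A G (q, s) a (q1, s1)" "greach A G (q1, s1) w (q', s')" by auto
  then show ?case using Cons.IH gstep_wf[OF assms(1)] Cons.prems by blast
qed simp

definition encode :: "('s \<Rightarrow> nat) \<Rightarrow> ('g \<Rightarrow> nat) \<Rightarrow> ('a, 's, 'g) gvpa \<Rightarrow> 'a vpa" where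
  "encode f g G = \<lparr>st = f ` gst G, init = f ` ginit G, fin = f ` gfin G, gam = g ` ggam G,
     dcall = (\<lambda>(q, a, q', x). (f q, a, f q', g x)) ` gcall G,
     dret = (\<lambda>(q, a, x, q'). (f q, a, map_option g x, f q')) ` gret G,
     dint = (\<lambda>(q, a, q'). (f q, a, f q')) ` gint G\<rparr>"

lemma vpa_step_encode:
  "gstep A G (q, s) a (q', s') \<Longrightarrow> vpa_step A (encode f g G) (f q, map g s) a (f q', map g s')"
  unfolding gstep_def vpa_step_def encode_def by (auto 4 4 intro: rev_image_eqI)

lemma vpa_reach_encode:
  "greach A G (q, s) w (q', s') \<Longrightarrow> vpa_reach A (encode f g G) (f q, map g s) w (f q', map g s')"
proof (induction w arbitrary: q s)
  case (Cons a w)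
  then obtain q1 s1 where step: "gstep A G (q, s) a (q1, s1)"
    and rest: "greach A G (q1, s1) w (q', s')"
    by auto
  have "vpa_step A (encode f g G) (f q, map g s) a (f q1, map g s1)"
    using vpa_step_encode[OF step] .
  moreover have "vpa_reach A (encode f g G) (f q1, map g s1) w (f q', map g s')"
    using Cons.IH[OF rest] .
  ultimately show ?case by auto
qed simp

lemma encode_dcallD:
  assumes wf: "gvpa_wf A G" and f: "inj_on f (gst G)" and q: "q \<in> gst G"
    and tr: "(f q, a, p, y) \<in> dcall (encode f g G)"
  shows "\<exists>q' x. (q, a, q', x) \<in> gcall G \<and> p = f q' \<and> y = g x"
proof -
  obtain q0 q' x where "(q0, a, q', x) \<in> gcall G" "f q0 = f q" "p = f q'" "y = g x"
    using tr by (auto simp: encode_def)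
  moreover have "q0 = q" using calculation wf f q by (auto simp: gvpa_wf_def dest: inj_onD)
  ultimately show ?thesis by blast
qed

lemma encode_dretD:
  assumes wf: "gvpa_wf A G" and f: "inj_on f (gst G)" and g: "inj_on g (ggam G)"
    and q: "q \<in> gst G" and y: "set_option y \<subseteq> ggam G"
    and tr: "(f q, a, map_option g y, p) \<in> dret (encode f g G)"
  shows "\<exists>q'. (q, a, y, q') \<in> gret G \<and> p = f q'"
proof -
  obtain q0 y0 q' where tr0: "(q0, a, y0, q') \<in> gret G" "f q0 = f q" "p = f q'"
    "map_option g y0 = map_option g y"
    using tr by (auto simp: encode_def)
  moreover have "q0 = q" and y0: "set_option y0 \<subseteq> ggam G"
    using tr0 wf f q by (auto simp: gvpa_wf_def dest: inj_onD)
  moreover have "y0 = y"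
    using tr0(4) y0 y g by (cases y0; cases y) (auto dest: inj_onD)
  ultimately show ?thesis by blast
qed

lemma encode_dintD:
  assumes wf: "gvpa_wf A G" and f: "inj_on f (gst G)" and q: "q \<in> gst G"
    and tr: "(f q, a, p) \<in> dint (encode f g G)"
  shows "\<exists>q'. (q, a, q') \<in> gint G \<and> p = f q'"
proof -
  obtain q0 q' where "(q0, a, q') \<in> gint G" "f q0 = f q" "p = f q'"
    using tr by (auto simp: encode_def)
  moreover have "q0 = q" using calculation wf f q by (auto simp: gvpa_wf_def dest: inj_onD)
  ultimately show ?thesis by blast
qed

lemma vpa_step_encodeD:
  assumes wf: "gvpa_wf A G" and f: "inj_on f (gst G)" and g: "inj_on g (ggam G)"
    and q: "q \<in> gst G" and s: "set s \<subseteq> ggam G"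
    and step: "vpa_step A (encode f g G) (f q, map g s) a (p, t)"
  shows "\<exists>q' s'. gstep A G (q, s) a (q', s') \<and> p = f q' \<and> t = map g s'"
proof -
  from step consider
      (call) x where "a \<in> calls A" "(f q, a, p, x) \<in> dcall (encode f g G)" "t = x # map g s"
    | (ret_bottom) "a \<in> rets A" "s = []" "t = []"
        "(f q, a, map_option g None, p) \<in> dret (encode f g G)"
    | (ret) y s1 where "a \<in> rets A" "s = y # s1" "t = map g s1"
        "(f q, a, map_option g (Some y), p) \<in> dret (encode f g G)"
    | (int) "a \<in> ints A" "(f q, a, p) \<in> dint (encode f g G)" "t = map g s"
    unfolding vpa_step_def by (cases s) auto
  then show ?thesis
  proof cases
    case call
    then obtain q' y where "(q, a, q', y) \<in> gcall G" "p = f q'" "x = g y"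
      using encode_dcallD[OF wf f q] by blast
    then show ?thesis using call
      by (intro exI[of _ q'] exI[of _ "y # s"]) (auto simp: gstep_def)
  next
    case ret_bottom
    then obtain q' where "(q, a, None, q') \<in> gret G" "p = f q'"
      using encode_dretD[OF wf f g q _ ret_bottom(4)] by auto
    then show ?thesis using ret_bottom
      by (intro exI[of _ q'] exI[of _ "[]"]) (auto simp: gstep_def)
  next
    case ret
    then obtain q' where "(q, a, Some y, q') \<in> gret G" "p = f q'"
      using encode_dretD[OF wf f g q _ ret(4)] s by auto
    then show ?thesis using ret
      by (intro exI[of _ q'] exI[of _ s1]) (auto simp: gstep_def)
  next
    case int
    then obtain q' where "(q, a, q') \<in> gint G" "p = f q'"
      using encode_dintD[OF wf f q] by blast
    then show ?thesis using int
      by (intro exI[of _ q'] exI[of _ s]) (auto simp: gstep_def)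
  qed
qed

lemma vpa_reach_encodeD:
  assumes wf: "gvpa_wf A G" and f: "inj_on f (gst G)" and g: "inj_on g (ggam G)"
  shows "vpa_reach A (encode f g G) (f q, map g s) w (p, t) \<Longrightarrow> q \<in> gst G \<Longrightarrow> set s \<subseteq> ggam G \<Longrightarrow>
    \<exists>q' s'. greach A G (q, s) w (q', s') \<and> p = f q' \<and> q' \<in> gst G"
proof (induction w arbitrary: q s)
  case (Cons a w)
  then obtain p1 t1 where "vpa_step A (encode f g G) (f q, map g s) a (p1, t1)"
    and rest: "vpa_reach A (encode f g G) (p1, t1) w (p, t)"
    by auto
  then obtain q1 s1 where step: "gstep A G (q, s) a (q1, s1)" "p1 = f q1" "t1 = map g s1"
    using vpa_step_encodeD[OF wf f g] Cons.prems by blast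
  moreover have "q1 \<in> gst G" "set s1 \<subseteq> ggam G"
    using gstep_wf[OF wf step(1)] Cons.prems by auto
  ultimately show ?case using Cons.IH rest by fastforce
qed auto

lemma is_VPL_glang:
  fixes G :: "('a, 's, 'g) gvpa"
  assumes wf: "gvpa_wf A G"
  shows "is_VPL A (glang A G)"
proof -
  obtain f :: "'s \<Rightarrow> nat" and n where f: "inj_on f (gst G)"
    using finite_imp_inj_to_nat_seg[of "gst G"] wf unfolding gvpa_wf_def by blast
  obtain g :: "'g \<Rightarrow> nat" and n where g: "inj_on g (ggam G)"
    using finite_imp_inj_to_nat_seg[of "ggam G"] wf unfolding gvpa_wf_def by blast
  let ?M = "encode f g G"
  have "vpa_wf A ?M"
    using wf unfolding vpa_wf_def gvpa_wf_def encode_def by (auto 0 3)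
  moreover have "vpa_lang A ?M = glang A G"
  proof (intro set_eqI iffI)
    fix w
    assume "w \<in> vpa_lang A ?M"
    then obtain q0 p t where q0: "q0 \<in> ginit G" "vpa_reach A ?M (f q0, map g []) w (p, t)"
      and p: "p \<in> f ` gfin G"
      unfolding vpa_lang_def encode_def by auto
    obtain q s where run: "greach A G (q0, []) w (q, s)" "p = f q" "q \<in> gst G"
      using vpa_reach_encodeD[OF wf f g q0(2)] q0(1) wf by (auto simp: gvpa_wf_def)
    moreover have "q \<in> gfin G" using p run f wf by (auto simp: gvpa_wf_def dest: inj_onD)
    ultimately show "w \<in> glang A G" using q0(1) unfolding glang_def by blast
  next
    fix w
    assume "w \<in> glang A G"
    then obtain q0 q s where "q0 \<in> ginit G" "greach A G (q0, []) w (q, s)" "q \<in> gfin G"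
      unfolding glang_def by blast
    then show "w \<in> vpa_lang A ?M"
      using vpa_reach_encode[of A G q0 "[]"] unfolding vpa_lang_def encode_def by fastforce
  qed
  ultimately show ?thesis unfolding is_VPL_def by blast
qed

section \<open>An automaton for the reduced shuffle\<close>

lemma vpa_reach_append:
  "vpa_reach A M c (u @ v) c'' \<longleftrightarrow> (\<exists>c'. vpa_reach A M c u c' \<and> vpa_reach A M c' v c'')"
  by (induction u arbitrary: c) auto

lemma vpa_wf_dcallD:
  "vpa_wf A N \<Longrightarrow> (q, a, q', g) \<in> dcall N \<Longrightarrow> q \<in> st N \<and> a \<in> calls A \<and> q' \<in> st N \<and> g \<in> gam N"
  unfolding vpa_wf_def by fast

lemma vpa_wf_dretD:
  "vpa_wf A N \<Longrightarrow> (q, a, g, q') \<in> dret N \<Longrightarrow>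
     q \<in> st N \<and> a \<in> rets A \<and> q' \<in> st N \<and> set_option g \<subseteq> gam N"
  unfolding vpa_wf_def by fastforce

lemma vpa_wf_dintD:
  "vpa_wf A N \<Longrightarrow> (q, a, q') \<in> dint N \<Longrightarrow> q \<in> st N \<and> a \<in> ints A \<and> q' \<in> st N"
  unfolding vpa_wf_def by fast

lemma det_complete_transitions:
  assumes "det_complete A N" and "p \<in> st N"
  shows "a \<in> calls A \<Longrightarrow> \<exists>p' g. (p, a, p', g) \<in> dcall N"
    and "a \<in> rets A \<Longrightarrow> set_option g \<subseteq> gam N \<Longrightarrow> \<exists>p'. (p, a, g, p') \<in> dret N"
    and "a \<in> ints A \<Longrightarrow> \<exists>p'. (p, a, p') \<in> dint N"
proof -
  have calls: "\<forall>q \<in> st N. \<forall>a \<in> calls A. \<exists>!p. (q, a, p) \<in> dcall N"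
    using assms(1) unfolding det_complete_def by (elim conjE) assumption
  have rets: "\<forall>q \<in> st N. \<forall>a \<in> rets A. \<forall>g \<in> insert None (Some ` gam N). \<exists>!q'. (q, a, g, q') \<in> dret N"
    using assms(1) unfolding det_complete_def by (elim conjE) assumption
  have ints: "\<forall>q \<in> st N. \<forall>a \<in> ints A. \<exists>!q'. (q, a, q') \<in> dint N"
    using assms(1) unfolding det_complete_def by (elim conjE) assumption
  show "a \<in> calls A \<Longrightarrow> \<exists>p' g. (p, a, p', g) \<in> dcall N"
    using calls assms(2) by fast
  show "a \<in> rets A \<Longrightarrow> set_option g \<subseteq> gam N \<Longrightarrow> \<exists>p'. (p, a, g, p') \<in> dret N"
  proof -
    assume "a \<in> rets A" "set_option g \<subseteq> gam N"
    moreover have "g \<in> insert None (Some ` gam N)" using calculation(2) by (cases g) auto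
    ultimately show ?thesis using rets assms(2) by blast
  qed
  show "a \<in> ints A \<Longrightarrow> \<exists>p'. (p, a, p') \<in> dint N"
    using ints assms(2) by blast
qed

lemma finite_bool_funs:
  assumes "finite (X True)" and "finite (X False)"
  shows "finite {f :: bool \<Rightarrow> 'b. \<forall>i. f i \<in> X i}"
proof (rule finite_subset)
  show "{f. \<forall>i. f i \<in> X i} \<subseteq> (\<lambda>(a, b) i. if i then a else b) ` (X True \<times> X False)"
  proof
    fix f :: "bool \<Rightarrow> 'b"
    assume "f \<in> {f. \<forall>i. f i \<in> X i}"
    then have "(f True, f False) \<in> X True \<times> X False" by simp
    moreover have "f = (\<lambda>(a, b) i. if i then a else b) (f True, f False)" by (simp add: fun_eq_iff)
    ultimately show "f \<in> (\<lambda>(a, b) i. if i then a else b) ` (X True \<times> X False)"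
      by (rule rev_image_eqI)
  qed
  show "finite ((\<lambda>(a, b) i. if i then a else b) ` (X True \<times> X False))"
    using assms by simp
qed

definition component_stack :: "bool \<Rightarrow> (bool \<times> nat \<times> nat) list \<Rightarrow> nat list" where
  "component_stack i s = map (fst \<circ> snd) (filter (\<lambda>\<gamma>. fst \<gamma> = i) s)"

definition order_stack :: "(bool \<times> nat \<times> nat) list \<Rightarrow> nat list" where
  "order_stack s = map (snd \<circ> snd) s"

lemma component_stack_simps [simp]:
  "component_stack i [] = []"
  "component_stack i ((j, g, h) # s) = (if j = i then g # component_stack i s else component_stack i s)"
  by (simp_all add: component_stack_def)

lemma order_stack_simps [simp]:
  "order_stack [] = []"
  "order_stack ((j, g, h) # s) = h # order_stack s"
  by (simp_all add: order_stack_def)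

locale reduction_automaton = shuffle_setting A1 A2 prec
  for A1 A2 :: "'a vpalph" and prec +
  fixes M1 M2 M :: "'a vpa" and ord :: "nat \<Rightarrow> 'a \<Rightarrow> 'a \<Rightarrow> bool" and q0 :: nat
  assumes vpa_wf_M1: "vpa_wf A1 M1" and vpa_wf_M2: "vpa_wf A2 M2"
    and det_complete_M: "det_complete (vp_union A1 A2) M" and init_M: "init M = {q0}"
    and ord_prec: "\<forall>w \<in> lists (letters (vp_union A1 A2)). \<forall>q s.
       vpa_reach (vp_union A1 A2) M (q0, []) w (q, s) \<longrightarrow> prec w = ord q"
begin

definition component_vpa :: "bool \<Rightarrow> 'a vpa" where
  "component_vpa i = (if i then M1 else M2)"

lemma vpa_wf_component: "vpa_wf (component i) (component_vpa i)"
  by (simp add: component_def component_vpa_def vpa_wf_M1 vpa_wf_M2)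

lemma vpa_wf_M: "vpa_wf U M"
  using det_complete_M by (simp add: det_complete_def)

lemma q0_st: "q0 \<in> st M"
  using vpa_wf_M init_M unfolding vpa_wf_def by blast

lemma init_component_st: "init (component_vpa i) \<subseteq> st (component_vpa i)"
  using vpa_wf_component unfolding vpa_wf_def by blast

(* A state (q, p, S) consists of the states q i of the component automata, the state p of the order
   automaton and the admissible sets S i of the prefix read so far; a stack symbol (i, g, h) is a
   symbol g pushed by component i together with the symbol h pushed by the order automaton. *)
definition prod_states :: "((bool \<Rightarrow> nat) \<times> nat \<times> (bool \<Rightarrow> 'a set)) set" where
  "prod_states = {q. \<forall>i. q i \<in> st (component_vpa i)} \<times> st M \<times> {S. \<forall>i. S i \<in> Pow L}"

definition prod_gam :: "(bool \<times> nat \<times> nat) set" where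
  "prod_gam = {(i, g, h). g \<in> gam (component_vpa i) \<and> h \<in> gam M}"

definition update_admissible :: "nat \<Rightarrow> 'a \<Rightarrow> (bool \<Rightarrow> 'a set) \<Rightarrow> bool \<Rightarrow> 'a set" where
  "update_admissible p x S = (\<lambda>i. if i = side x then L else S i \<inter> {b. ord p x b})"

definition prod_call where
  "prod_call = {(c, x, c', \<gamma>). \<exists>q p S q' p' g h. c = (q, p, S) \<and> c \<in> prod_states \<and> x \<in> S (side x) \<and>
     c' = (q(side x := q'), p', update_admissible p x S) \<and> \<gamma> = (side x, g, h) \<and>
     (q (side x), x, q', g) \<in> dcall (component_vpa (side x)) \<and> (p, x, p', h) \<in> dcall M}"

(* \<delta> = None is a return on the empty stack, \<delta> = Some (g, h) pops (side x, g, h). *)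
definition prod_ret where
  "prod_ret = {(c, x, \<gamma>, c'). \<exists>q p S q' p' \<delta>. c = (q, p, S) \<and> c \<in> prod_states \<and> x \<in> S (side x) \<and>
     c' = (q(side x := q'), p', update_admissible p x S) \<and>
     \<gamma> = map_option (\<lambda>(g, h). (side x, g, h)) \<delta> \<and>
     (q (side x), x, map_option fst \<delta>, q') \<in> dret (component_vpa (side x)) \<and>
     (p, x, map_option snd \<delta>, p') \<in> dret M}"

definition prod_int where
  "prod_int = {(c, x, c'). \<exists>q p S q' p'. c = (q, p, S) \<and> c \<in> prod_states \<and> x \<in> S (side x) \<and>
     c' = (q(side x := q'), p', update_admissible p x S) \<and>
     (q (side x), x, q') \<in> dint (component_vpa (side x)) \<and> (p, x, p') \<in> dint M}"

definition product_vpa :: "('a, (bool \<Rightarrow> nat) \<times> nat \<times> (bool \<Rightarrow> 'a set), bool \<times> nat \<times> nat) gvpa" where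
  "product_vpa = \<lparr>gst = prod_states,
     ginit = {(q, q0, \<lambda>_. L) | q. \<forall>i. q i \<in> init (component_vpa i)},
     gfin = {(q, p, S) \<in> prod_states. \<forall>i. q i \<in> fin (component_vpa i)},
     ggam = prod_gam, gcall = prod_call, gret = prod_ret, gint = prod_int\<rparr>"

lemma prod_states_update:
  assumes "(q, p, S) \<in> prod_states" and "q' \<in> st (component_vpa (side x))" and "p' \<in> st M"
  shows "(q(side x := q'), p', update_admissible p x S) \<in> prod_states"
  using assms by (auto simp: prod_states_def update_admissible_def)

lemma prod_call_wf:
  assumes "(c, x, c', \<gamma>) \<in> prod_call"
  shows "c \<in> prod_states \<and> x \<in> calls U \<and> c' \<in> prod_states \<and> \<gamma> \<in> prod_gam"
proof -
  obtain q p S q' p' g h where c: "c = (q, p, S)" "c \<in> prod_states"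
    and c': "c' = (q(side x := q'), p', update_admissible p x S)" and \<gamma>: "\<gamma> = (side x, g, h)"
    and tr: "(q (side x), x, q', g) \<in> dcall (component_vpa (side x))" "(p, x, p', h) \<in> dcall M"
    using assms unfolding prod_call_def by blast
  show ?thesis
    using vpa_wf_dcallD[OF vpa_wf_component tr(1)] vpa_wf_dcallD[OF vpa_wf_M tr(2)]
      prod_states_update c c' \<gamma> by (auto simp: prod_gam_def)
qed

lemma prod_ret_wf:
  assumes "(c, x, \<gamma>, c') \<in> prod_ret"
  shows "c \<in> prod_states \<and> x \<in> rets U \<and> c' \<in> prod_states \<and> set_option \<gamma> \<subseteq> prod_gam"
proof -
  obtain q p S q' p' \<delta> where c: "c = (q, p, S)" "c \<in> prod_states"
    and c': "c' = (q(side x := q'), p', update_admissible p x S)"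
    and \<gamma>: "\<gamma> = map_option (\<lambda>(g, h). (side x, g, h)) \<delta>"
    and tr: "(q (side x), x, map_option fst \<delta>, q') \<in> dret (component_vpa (side x))"
      "(p, x, map_option snd \<delta>, p') \<in> dret M"
    using assms unfolding prod_ret_def by blast
  show ?thesis
    using vpa_wf_dretD[OF vpa_wf_component tr(1)] vpa_wf_dretD[OF vpa_wf_M tr(2)]
      prod_states_update c c' \<gamma> by (cases \<delta>) (auto simp: prod_gam_def)
qed

lemma prod_int_wf:
  assumes "(c, x, c') \<in> prod_int"
  shows "c \<in> prod_states \<and> x \<in> ints U \<and> c' \<in> prod_states"
proof -
  obtain q p S q' p' where c: "c = (q, p, S)" "c \<in> prod_states"
    and c': "c' = (q(side x := q'), p', update_admissible p x S)"
    and tr: "(q (side x), x, q') \<in> dint (component_vpa (side x))" "(p, x, p') \<in> dint M"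
    using assms unfolding prod_int_def by blast
  show ?thesis
    using vpa_wf_dintD[OF vpa_wf_component tr(1)] vpa_wf_dintD[OF vpa_wf_M tr(2)]
      prod_states_update c c' by auto
qed

lemma gvpa_wf_product: "gvpa_wf U product_vpa"
proof -
  have "finite {q. \<forall>i. q i \<in> st (component_vpa i)}"
    using vpa_wf_component[of True] vpa_wf_component[of False]
    by (intro finite_bool_funs) (simp_all add: vpa_wf_def)
  moreover have "finite {S :: bool \<Rightarrow> 'a set. \<forall>i. S i \<in> Pow L}"
    using finite_L by (intro finite_bool_funs) simp_all
  moreover have "finite (st M)" using vpa_wf_M by (simp add: vpa_wf_def)
  ultimately have "finite prod_states"
    unfolding prod_states_def by (intro finite_cartesian_product)
  moreover have "finite prod_gam"
  proof (rule finite_subset)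
    show "prod_gam \<subseteq> (UNIV :: bool set) \<times> (gam M1 \<union> gam M2) \<times> gam M"
      by (auto simp: prod_gam_def component_vpa_def split: if_splits)
    have "finite (gam M1)" "finite (gam M2)" "finite (gam M)"
      using vpa_wf_M1 vpa_wf_M2 vpa_wf_M by (simp_all add: vpa_wf_def)
    then show "finite ((UNIV :: bool set) \<times> (gam M1 \<union> gam M2) \<times> gam M)"
      by (intro finite_cartesian_product finite_UnI) simp_all
  qed
  moreover have "ginit product_vpa \<subseteq> gst product_vpa"
    using init_component_st q0_st by (auto simp: product_vpa_def prod_states_def)
  moreover have "gfin product_vpa \<subseteq> gst product_vpa"
    by (auto simp: product_vpa_def)
  moreover have "\<forall>(c, x, c', \<gamma>) \<in> prod_call. c \<in> prod_states \<and> x \<in> calls U \<and> c' \<in> prod_states \<and> \<gamma> \<in> prod_gam"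
    using prod_call_wf by fast
  moreover have "\<forall>(c, x, \<gamma>, c') \<in> prod_ret.
      c \<in> prod_states \<and> x \<in> rets U \<and> c' \<in> prod_states \<and> set_option \<gamma> \<subseteq> prod_gam"
    using prod_ret_wf by fast
  moreover have "\<forall>(c, x, c') \<in> prod_int. c \<in> prod_states \<and> x \<in> ints U \<and> c' \<in> prod_states"
    using prod_int_wf by fast
  ultimately show ?thesis
    unfolding gvpa_wf_def by (simp add: product_vpa_def)
qed

lemma gstep_productD:
  assumes "gstep U product_vpa ((q, p, S), s) x ((q', p', S'), s')"
  shows "x \<in> L \<and> x \<in> S (side x) \<and> S' = update_admissible p x S \<and> q' (\<not> side x) = q (\<not> side x) \<and>
    vpa_step (component (side x)) (component_vpa (side x))
      (q (side x), component_stack (side x) s) x (q' (side x), component_stack (side x) s') \<and>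
    component_stack (\<not> side x) s' = component_stack (\<not> side x) s \<and>
    vpa_step U M (p, order_stack s) x (p', order_stack s') \<and>
    map fst s' = (if x \<in> calls U then side x # map fst s
                  else if x \<in> rets U then tl (map fst s) else map fst s)"
proof -
  let ?i = "side x"
  from assms consider
      (call) \<gamma> where "x \<in> calls U" "((q, p, S), x, (q', p', S'), \<gamma>) \<in> prod_call" "s' = \<gamma> # s"
    | (ret_bottom) "x \<in> rets U" "s = []" "s' = []" "((q, p, S), x, None, (q', p', S')) \<in> prod_ret"
    | (ret) \<gamma> where "x \<in> rets U" "s = \<gamma> # s'" "((q, p, S), x, Some \<gamma>, (q', p', S')) \<in> prod_ret"
    | (int) "x \<in> ints U" "((q, p, S), x, (q', p', S')) \<in> prod_int" "s' = s"
    unfolding gstep_def product_vpa_def by auto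
  then show ?thesis
  proof cases
    case call
    then obtain qi g h where "q' = q(?i := qi)" "x \<in> S ?i" "S' = update_admissible p x S"
      "\<gamma> = (?i, g, h)" "(q ?i, x, qi, g) \<in> dcall (component_vpa ?i)" "(p, x, p', h) \<in> dcall M"
      unfolding prod_call_def by auto
    then show ?thesis using call kinds_of_call[OF call(1)] by (auto simp: vpa_step_def)
  next
    case ret_bottom
    then obtain qi where "q' = q(?i := qi)" "x \<in> S ?i" "S' = update_admissible p x S"
      "(q ?i, x, None, qi) \<in> dret (component_vpa ?i)" "(p, x, None, p') \<in> dret M"
      unfolding prod_ret_def by auto
    then show ?thesis
      using ret_bottom kinds_of_ret[OF ret_bottom(1)] by (auto simp: vpa_step_def)
  next
    case ret
    then obtain qi \<delta> where "q' = q(?i := qi)" "x \<in> S ?i" "S' = update_admissible p x S"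
      "Some \<gamma> = map_option (\<lambda>(g, h). (?i, g, h)) \<delta>"
      "(q ?i, x, map_option fst \<delta>, qi) \<in> dret (component_vpa ?i)"
      "(p, x, map_option snd \<delta>, p') \<in> dret M"
      unfolding prod_ret_def by auto
    moreover obtain g h where "\<delta> = Some (g, h)" using calculation(4) by (cases \<delta>) auto
    ultimately show ?thesis using ret kinds_of_ret[OF ret(1)] by (auto simp: vpa_step_def)
  next
    case int
    then obtain qi where "q' = q(?i := qi)" "x \<in> S ?i" "S' = update_admissible p x S"
      "(q ?i, x, qi) \<in> dint (component_vpa ?i)" "(p, x, p') \<in> dint M"
      unfolding prod_int_def by auto
    then show ?thesis using int kinds_of_int[OF int(1)] by (auto simp: vpa_step_def)
  qed
qed

definition tracks :: "'a list \<Rightarrow> ((bool \<Rightarrow> nat) \<times> nat \<times> (bool \<Rightarrow> 'a set)) \<times> (bool \<times> nat \<times> nat) list \<Rightarrow> bool"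
  where
  "tracks al c \<longleftrightarrow> (case c of ((q, p, S), s) \<Rightarrow>
     (q, p, S) \<in> prod_states \<and> set s \<subseteq> prod_gam \<and> al \<in> lists L \<and>
     vpa_reach U M (q0, []) al (p, order_stack s) \<and> S = (\<lambda>i. admissible (component i) al) \<and>
     map fst s = map side (call_stack U al))"

lemma tracks_initial:
  assumes "\<forall>i. q i \<in> init (component_vpa i)"
  shows "tracks [] ((q, q0, \<lambda>_. L), [])"
  using assms init_component_st q0_st by (auto simp: tracks_def prod_states_def)

lemma tracks_gstep:
  assumes tr: "tracks al ((q, p, S), s)"
    and step: "gstep U product_vpa ((q, p, S), s) x ((q', p', S'), s')"
  shows "tracks (al @ [x]) ((q', p', S'), s')"
proof -
  note D = gstep_productD[OF step]
  have al: "(q, p, S) \<in> prod_states" "set s \<subseteq> prod_gam" "al \<in> lists L"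
    "vpa_reach U M (q0, []) al (p, order_stack s)" "S = (\<lambda>i. admissible (component i) al)"
    "map fst s = map side (call_stack U al)"
    using tr by (auto simp: tracks_def)
  have "(q', p', S') \<in> prod_states \<and> set s' \<subseteq> prod_gam"
    using gstep_wf[OF gvpa_wf_product step] al(1,2) by (simp add: product_vpa_def)
  moreover have "vpa_reach U M (q0, []) (al @ [x]) (p', order_stack s')"
    using al(4) D by (auto simp: vpa_reach_append)
  moreover have "S' = (\<lambda>i. admissible (component i) (al @ [x]))"
  proof -
    have "ord p = prec al" using ord_prec al(3,4) by metis
    then show ?thesis
      using D al(5) letters_component_iff[of x]
      by (auto simp: update_admissible_def admissible_snoc fun_eq_iff)
  qed
  moreover have "map fst s' = map side (call_stack U (al @ [x]))"
    using D al(6) by (simp add: stack_step_def map_tl)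
  ultimately show ?thesis using al(3) D by (simp add: tracks_def)
qed

lemma gstep_product_callI:
  assumes states: "(q, p, S) \<in> prod_states" and call: "x \<in> calls U" and S: "x \<in> S (side x)"
    and step: "vpa_step (component (side x)) (component_vpa (side x))
      (q (side x), component_stack (side x) s) x (qi, t)"
  shows "\<exists>p' s'. gstep U product_vpa ((q, p, S), s) x ((q(side x := qi), p', update_admissible p x S), s') \<and>
    component_stack (side x) s' = t"
proof -
  let ?i = "side x"
  obtain g where g: "(q ?i, x, qi, g) \<in> dcall (component_vpa ?i)" "t = g # component_stack ?i s"
    using step kinds_of_call[OF call] by (auto simp: vpa_step_def)
  have "p \<in> st M" using states by (simp add: prod_states_def)
  then obtain p' h where h: "(p, x, p', h) \<in> dcall M"
    using det_complete_transitions(1)[OF det_complete_M _ call] by blast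
  have "gstep U product_vpa ((q, p, S), s) x ((q(?i := qi), p', update_admissible p x S), (?i, g, h) # s)"
    using call states S g(1) h unfolding gstep_def product_vpa_def prod_call_def by auto
  moreover have "component_stack ?i ((?i, g, h) # s) = t" using g(2) by simp
  ultimately show ?thesis by blast
qed

lemma gstep_product_retI:
  assumes states: "(q, p, S) \<in> prod_states" and gam: "set s \<subseteq> prod_gam"
    and ret: "x \<in> rets U" and S: "x \<in> S (side x)" and tag: "s = [] \<or> fst (hd s) = side x"
    and step: "vpa_step (component (side x)) (component_vpa (side x))
      (q (side x), component_stack (side x) s) x (qi, t)"
  shows "\<exists>p' s'. gstep U product_vpa ((q, p, S), s) x ((q(side x := qi), p', update_admissible p x S), s') \<and>
    component_stack (side x) s' = t"
proof -
  let ?i = "side x" and ?N = "component_vpa (side x)"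
  have p: "p \<in> st M" using states by (simp add: prod_states_def)
  consider (bottom) "s = []" | (top) g h s0 where "s = (?i, g, h) # s0"
    using tag by (cases s) auto
  then show ?thesis
  proof cases
    case bottom
    then have qi: "(q ?i, x, None, qi) \<in> dret ?N" "t = []"
      using step kinds_of_ret[OF ret] by (auto simp: vpa_step_def)
    obtain p' where "(p, x, None, p') \<in> dret M"
      using det_complete_transitions(2)[OF det_complete_M p ret] by fastforce
    then have "gstep U product_vpa ((q, p, S), s) x ((q(?i := qi), p', update_admissible p x S), [])"
      using ret bottom states S qi(1) unfolding gstep_def product_vpa_def prod_ret_def
      by (auto intro!: exI[of _ None])
    moreover have "component_stack ?i [] = t" using qi(2) by simp
    ultimately show ?thesis by blast
  next
    case top
    then have qi: "(q ?i, x, Some g, qi) \<in> dret ?N" "t = component_stack ?i s0"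
      using step kinds_of_ret[OF ret] by (auto simp: vpa_step_def)
    have "h \<in> gam M" using gam top by (auto simp: prod_gam_def)
    then obtain p' where "(p, x, Some h, p') \<in> dret M"
      using det_complete_transitions(2)[OF det_complete_M p ret] by fastforce
    then have "gstep U product_vpa ((q, p, S), s) x ((q(?i := qi), p', update_admissible p x S), s0)"
      using ret top states S qi(1) unfolding gstep_def product_vpa_def prod_ret_def
      by (auto intro!: exI[of _ "Some (g, h)"])
    moreover have "component_stack ?i s0 = t" using qi(2) by simp
    ultimately show ?thesis by blast
  qed
qed

lemma gstep_product_intI:
  assumes states: "(q, p, S) \<in> prod_states" and int: "x \<in> ints U" and S: "x \<in> S (side x)"
    and step: "vpa_step (component (side x)) (component_vpa (side x))
      (q (side x), component_stack (side x) s) x (qi, t)"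
  shows "\<exists>p' s'. gstep U product_vpa ((q, p, S), s) x ((q(side x := qi), p', update_admissible p x S), s') \<and>
    component_stack (side x) s' = t"
proof -
  let ?i = "side x"
  have qi: "(q ?i, x, qi) \<in> dint (component_vpa ?i)" "t = component_stack ?i s"
    using step kinds_of_int[OF int] by (auto simp: vpa_step_def)
  have "p \<in> st M" using states by (simp add: prod_states_def)
  then obtain p' where "(p, x, p') \<in> dint M"
    using det_complete_transitions(3)[OF det_complete_M _ int] by blast
  then have "gstep U product_vpa ((q, p, S), s) x ((q(?i := qi), p', update_admissible p x S), s)"
    using int states S qi(1) unfolding gstep_def product_vpa_def prod_int_def by auto
  then show ?thesis using qi(2) by blast
qed

lemma gstep_productI:
  assumes tr: "tracks al ((q, p, S), s)" and x: "x \<in> L" "x \<in> admissible (component (side x)) al"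
    and top: "x \<in> rets U \<Longrightarrow> call_stack U al = [] \<or> side (hd (call_stack U al)) = side x"
    and step: "vpa_step (component (side x)) (component_vpa (side x))
      (q (side x), component_stack (side x) s) x (qi, t)"
  shows "\<exists>p' s'. gstep U product_vpa ((q, p, S), s) x ((q(side x := qi), p', update_admissible p x S), s') \<and>
    component_stack (side x) s' = t"
proof -
  have states: "(q, p, S) \<in> prod_states" and gam: "set s \<subseteq> prod_gam" and S: "x \<in> S (side x)"
    and tags: "map fst s = map side (call_stack U al)"
    using tr x(2) by (auto simp: tracks_def)
  have "x \<in> calls U \<or> x \<in> rets U \<or> x \<in> ints U" using x(1) by (simp add: letters_def)
  moreover have "s = [] \<or> fst (hd s) = side x" if "x \<in> rets U"
    using top[OF that] tags by (cases s; cases "call_stack U al") auto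
  ultimately show ?thesis
    using gstep_product_callI[OF states _ S step] gstep_product_retI[OF states gam _ S _ step]
      gstep_product_intI[OF states _ S step]
    by blast
qed

lemma greach_product_sound:
  "greach U product_vpa ((q, p, S), s) v ((q', p', S'), s') \<Longrightarrow> tracks al ((q, p, S), s) \<Longrightarrow>
    v \<in> lists L \<and> (\<forall>u x v'. v = u @ x # v' \<longrightarrow> x \<in> admissible (component (side x)) (al @ u)) \<and>
    (\<forall>i. vpa_reach (component i) (component_vpa i) (q i, component_stack i s) (proj (component i) v)
      (q' i, component_stack i s'))"
proof (induction v arbitrary: q p S s al)
  case (Cons x v)
  obtain q1 p1 S1 s1 where step: "gstep U product_vpa ((q, p, S), s) x ((q1, p1, S1), s1)"
    and rest: "greach U product_vpa ((q1, p1, S1), s1) v ((q', p', S'), s')"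
    using Cons.prems(1) unfolding greach.simps split_paired_Ex by blast
  note D = gstep_productD[OF step]
  have tr1: "tracks (al @ [x]) ((q1, p1, S1), s1)"
    using tracks_gstep[OF Cons.prems(2) step] .
  note IH = Cons.IH[OF rest tr1]
  have adm: "x \<in> admissible (component (side x)) al"
    using D Cons.prems(2) by (auto simp: tracks_def)
  have "\<forall>u y v'. x # v = u @ y # v' \<longrightarrow> y \<in> admissible (component (side y)) (al @ u)"
    using adm IH by (auto simp: Cons_eq_append_conv)
  moreover have "vpa_reach (component i) (component_vpa i) (q i, component_stack i s)
      (proj (component i) (x # v)) (q' i, component_stack i s')" for i
  proof (cases "side x = i")
    case True
    have proj_eq: "proj (component i) (x # v) = x # proj (component i) v"
      using proj_component_Cons[of x i] True D by simp
    have "vpa_step (component i) (component_vpa i) (q i, component_stack i s) x (q1 i, component_stack i s1)"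
      using D True by blast
    moreover have "vpa_reach (component i) (component_vpa i) (q1 i, component_stack i s1)
        (proj (component i) v) (q' i, component_stack i s')"
      using IH by blast
    ultimately show ?thesis unfolding proj_eq by auto
  next
    case False
    then have "i = (\<not> side x)" by blast
    then have proj_eq: "proj (component i) (x # v) = proj (component i) v"
      and "q1 i = q i" and "component_stack i s1 = component_stack i s"
      using proj_component_Cons[of x i] D by auto
    moreover have "vpa_reach (component i) (component_vpa i) (q1 i, component_stack i s1)
        (proj (component i) v) (q' i, component_stack i s')"
      using IH by blast
    ultimately show ?thesis unfolding proj_eq by simp
  qed
  ultimately show ?case using D IH by simp
qed simp

lemma greach_product_complete:
  "tracks al ((q, p, S), s) \<Longrightarrow> v \<in> lists L \<Longrightarrow>
    (\<forall>u x v'. v = u @ x # v' \<longrightarrow> x \<in> admissible (component (side x)) (al @ u)) \<Longrightarrow>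
    returns_matched (al @ v) \<Longrightarrow>
    (\<forall>i. vpa_reach (component i) (component_vpa i) (q i, component_stack i s) (proj (component i) v)
      (q' i, t i)) \<Longrightarrow>
    \<exists>p' S' s'. greach U product_vpa ((q, p, S), s) v ((q', p', S'), s')"
proof (induction v arbitrary: q p S s al)
  case Nil
  then have "q' = q" by (simp add: fun_eq_iff)
  then show ?case by simp
next
  case (Cons x v)
  let ?i = "side x"
  have xL: "x \<in> L" and vL: "v \<in> lists L" using Cons.prems(2) by auto
  have adm: "x \<in> admissible (component ?i) al" using Cons.prems(3) by force
  have "returns_matched (al @ [x])"
    using returns_matched_appendD[of "al @ [x]" v] Cons.prems(4) by simp
  then have top: "x \<in> rets U \<Longrightarrow> call_stack U al = [] \<or> side (hd (call_stack U al)) = side x"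
    by (simp add: returns_matched_snoc)
  obtain qi ti where qi: "vpa_step (component ?i) (component_vpa ?i) (q ?i, component_stack ?i s) x (qi, ti)"
    and reach_i: "vpa_reach (component ?i) (component_vpa ?i) (qi, ti) (proj (component ?i) v) (q' ?i, t ?i)"
  proof -
    have "proj (component ?i) (x # v) = x # proj (component ?i) v"
      using proj_component_Cons[OF xL] by simp
    then show thesis using that Cons.prems(5)[rule_format, of ?i] by auto
  qed
  obtain p1 s1 where step: "gstep U product_vpa ((q, p, S), s) x ((q(?i := qi), p1, update_admissible p x S), s1)"
    and s1: "component_stack ?i s1 = ti"
    using gstep_productI[OF Cons.prems(1) xL adm top qi] by blast
  note D = gstep_productD[OF step]
  have tr1: "tracks (al @ [x]) ((q(?i := qi), p1, update_admissible p x S), s1)"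
    using tracks_gstep[OF Cons.prems(1) step] .
  have "vpa_reach (component j) (component_vpa j) ((q(?i := qi)) j, component_stack j s1)
      (proj (component j) v) (q' j, t j)" for j
  proof (cases "j = ?i")
    case True
    then show ?thesis using reach_i s1 by simp
  next
    case False
    then have "j = (\<not> ?i)" by blast
    then have proj_eq: "proj (component j) (x # v) = proj (component j) v"
      and "component_stack j s1 = component_stack j s"
      using D proj_component_Cons[OF xL, of j] by auto
    moreover have "vpa_reach (component j) (component_vpa j) (q j, component_stack j s)
        (proj (component j) (x # v)) (q' j, t j)"
      using Cons.prems(5) by blast
    ultimately show ?thesis using False unfolding proj_eq by simp
  qed
  moreover have "\<forall>u y v'. v = u @ y # v' \<longrightarrow> y \<in> admissible (component (side y)) ((al @ [x]) @ u)"
    using Cons.prems(3) by fastforce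
  ultimately obtain p' S' s' where
    "greach U product_vpa ((q(?i := qi), p1, update_admissible p x S), s1) v ((q', p', S'), s')"
    using Cons.IH[OF tr1 vL] Cons.prems(4) by fastforce
  then have "greach U product_vpa ((q, p, S), s) (x # v) ((q', p', S'), s')"
    unfolding greach.simps using step by blast
  then show ?case by blast
qed

lemma shuffle_component_iff:
  "w \<in> shuffle A1 A2 (vpa_lang A1 M1) (vpa_lang A2 M2) \<longleftrightarrow>
     w \<in> lists L \<and> (\<forall>i. proj (component i) w \<in> vpa_lang (component i) (component_vpa i))"
  by (auto simp: shuffle_iff component_def component_vpa_def all_bool_eq)

lemma glang_product_subset_red:
  "glang U product_vpa \<subseteq> red A1 A2 prec (shuffle A1 A2 (vpa_lang A1 M1) (vpa_lang A2 M2))"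
proof
  fix w
  assume "w \<in> glang U product_vpa"
  then obtain q q' p' S' s' where init: "\<forall>i. q i \<in> init (component_vpa i)"
    and run: "greach U product_vpa ((q, q0, \<lambda>_. L), []) w ((q', p', S'), s')"
    and fin: "\<forall>i. q' i \<in> fin (component_vpa i)"
    unfolding glang_def product_vpa_def by auto
  note sound = greach_product_sound[OF run tracks_initial[OF init]]
  have "proj (component i) w \<in> vpa_lang (component i) (component_vpa i)" for i
  proof -
    have "vpa_reach (component i) (component_vpa i) (q i, []) (proj (component i) w)
        (q' i, component_stack i s')"
      using sound by simp
    then show ?thesis unfolding vpa_lang_def using init fin by blast
  qed
  then have "w \<in> shuffle A1 A2 (vpa_lang A1 M1) (vpa_lang A2 M2)"
    using sound by (simp add: shuffle_component_iff)
  moreover have "locally_reduced w" using sound by (simp add: locally_reduced_def)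
  ultimately show "w \<in> red A1 A2 prec (shuffle A1 A2 (vpa_lang A1 M1) (vpa_lang A2 M2))"
    by (simp add: red_shuffle_eq)
qed

lemma red_subset_glang_product:
  assumes wm1: "\<forall>w \<in> vpa_lang A1 M1. well_matched A1 w"
    and wm2: "\<forall>w \<in> vpa_lang A2 M2. well_matched A2 w"
    and coh: "coherent A1 A2 prec"
  shows "red A1 A2 prec (shuffle A1 A2 (vpa_lang A1 M1) (vpa_lang A2 M2)) \<subseteq> glang U product_vpa"
proof
  fix w
  assume "w \<in> red A1 A2 prec (shuffle A1 A2 (vpa_lang A1 M1) (vpa_lang A2 M2))"
  then have ws: "w \<in> shuffle A1 A2 (vpa_lang A1 M1) (vpa_lang A2 M2)" and lr: "locally_reduced w"
    by (auto simp: red_shuffle_eq)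
  then have wL: "w \<in> lists L"
    and acc: "\<And>i. proj (component i) w \<in> vpa_lang (component i) (component_vpa i)"
    by (auto simp: shuffle_component_iff)
  have "\<forall>i. \<exists>a b t. a \<in> init (component_vpa i) \<and> b \<in> fin (component_vpa i) \<and>
      vpa_reach (component i) (component_vpa i) (a, []) (proj (component i) w) (b, t)"
    using acc unfolding vpa_lang_def by blast
  then obtain q q' t where init: "\<forall>i. q i \<in> init (component_vpa i)"
    and fin: "\<forall>i. q' i \<in> fin (component_vpa i)"
    and reach: "\<forall>i. vpa_reach (component i) (component_vpa i) (q i, []) (proj (component i) w)
      (q' i, t i)"
    by metis
  have "well_matched (component i) (proj (component i) w)" for i
    using ws wm1 wm2 by (cases i) (auto simp: shuffle_iff component_def)
  then have "returns_matched w"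
    using locally_reduced_returns_matched[OF wL lr _ coh] by blast
  moreover have "\<forall>u x v. w = u @ x # v \<longrightarrow> x \<in> admissible (component (side x)) ([] @ u)"
    using lr by (simp add: locally_reduced_def)
  ultimately obtain p' S' s' where run: "greach U product_vpa ((q, q0, \<lambda>_. L), []) w ((q', p', S'), s')"
    using greach_product_complete[OF tracks_initial[OF init] wL, of q' t] reach by auto
  have "(q', p', S') \<in> prod_states"
    using greach_wf[OF gvpa_wf_product run] tracks_initial[OF init]
    by (simp add: product_vpa_def tracks_def)
  then have "(q', p', S') \<in> gfin product_vpa" using fin by (simp add: product_vpa_def)
  moreover have "(q, q0, \<lambda>_. L) \<in> ginit product_vpa" using init by (auto simp: product_vpa_def)
  ultimately show "w \<in> glang U product_vpa"
    unfolding glang_def using run by blast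
qed

end

theorem theorem3p18:
  fixes A1 A2 :: "'a vpalph" and P1 P2 :: "'a list set"
    and prec :: "'a list \<Rightarrow> 'a \<Rightarrow> 'a \<Rightarrow> bool"
  assumes "vp_alphabet A1" and "vp_alphabet A2"
    and "letters A1 \<inter> letters A2 = {}"
    and "P1 \<subseteq> lists (letters A1)" and "P2 \<subseteq> lists (letters A2)"
    and "is_VPL A1 P1" and "is_VPL A2 P2"
    and "\<forall>w \<in> P1. well_matched A1 w" and "\<forall>w \<in> P2. well_matched A2 w"
    and "contextual_order (vp_union A1 A2) prec"
    and "vp_order (vp_union A1 A2) prec"
    and "coherent A1 A2 prec"
  shows "is_VPL (vp_union A1 A2) (red A1 A2 prec (shuffle A1 A2 P1 P2)) \<and>
         (\<forall>w \<in> red A1 A2 prec (shuffle A1 A2 P1 P2). well_nested A1 A2 w)"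
proof -
  obtain M1 where M1: "vpa_wf A1 M1" "vpa_lang A1 M1 = P1"
    using assms(6) unfolding is_VPL_def by blast
  obtain M2 where M2: "vpa_wf A2 M2" "vpa_lang A2 M2 = P2"
    using assms(7) unfolding is_VPL_def by blast
  obtain M ord q0 where M: "det_complete (vp_union A1 A2) M" "init M = {q0}"
    "\<forall>w \<in> lists (letters (vp_union A1 A2)). \<forall>q s.
       vpa_reach (vp_union A1 A2) M (q0, []) w (q, s) \<longrightarrow> prec w = ord q"
    using assms(11) unfolding vp_order_def by blast
  interpret reduction_automaton A1 A2 prec M1 M2 M ord q0
    using assms(1-3,10) M1(1) M2(1) M by unfold_locales
  have "glang U product_vpa = red A1 A2 prec (shuffle A1 A2 P1 P2)"
    using glang_product_subset_red red_subset_glang_product assms(8,9,12) M1(2) M2(2) by auto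
  then have "is_VPL U (red A1 A2 prec (shuffle A1 A2 P1 P2))"
    using is_VPL_glang[OF gvpa_wf_product] by simp
  moreover have "\<forall>w \<in> red A1 A2 prec (shuffle A1 A2 P1 P2). well_nested A1 A2 w"
    using red_well_nested assms(8,9,12) by blast
  ultimately show ?thesis by blast
qed

end
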